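(* Let $n>2$. Then ${\rm Sp}(2n,2)$ is generated by $\hat x_{1n}(1)\hat z_1(1)=(I+E_{1n})(I+E_{n+1,2n})(I+E_{1,2n})$ and the $2n\times 2n$ matrix $\hat w$ over ${\rm GF}(2)$ whose nonzero entries are $1$ in positions $(i+1,i)$ for $1\le i\le n-1$, $(2n,n)$, $(j-1,j)$ for $n+2\le j\le 2n$, and $(1,n+1)$.
   Context: ${\rm Sp}(2n,2)$ is the group of $2n\times 2n$ matrices $X$ over ${\rm GF}(2)$ with $X^tJX=J$, where $J$ is the $2n\times 2n$ antidiagonal matrix of ones. $E_{ij}$ is the matrix unit with $1$ in position $(i,j)$. With $i'=2n+1-i$: $\hat x_{ij}(\alpha)=(I+\alpha E_{ij})(I-\alpha E_{j'i'})$ and $\hat z_i(\alpha)=I+\alpha E_{ii'}$; $\hat w$ is the permutation matrix of the $2n$-cycle $(1,2,\dots,n,1',\dots,n')$. *)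

theory Defs
  imports "HOL-Library.Z2" "Jordan_Normal_Form.Matrix"
begin

(* Matrices over GF(2) = type bit; Jordan_Normal_Form matrices are 0-indexed,
   so the paper's 1-based position (i,j) is entry (i-1,j-1). *)

definition Jmat :: "nat \<Rightarrow> bit mat" where
  "Jmat n = mat (2*n) (2*n) (\<lambda>(r,c). if r + c = 2*n - 1 then 1 else 0)"

definition Sp2 :: "nat \<Rightarrow> bit mat set" where
  "Sp2 n = {X. X \<in> carrier_mat (2*n) (2*n) \<and> transpose_mat X * Jmat n * X = Jmat n}"

definition Eunit :: "nat \<Rightarrow> nat \<Rightarrow> nat \<Rightarrow> bit mat" where
  "Eunit d i j = mat d d (\<lambda>(r,c). if r + 1 = i \<and> c + 1 = j then 1 else 0)"

inductive_set gen_grp :: "nat \<Rightarrow> bit mat set \<Rightarrow> bit mat set" for d S where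
  one: "1\<^sub>m d \<in> gen_grp d S"
| base: "s \<in> S \<Longrightarrow> s \<in> gen_grp d S"
| mult: "a \<in> gen_grp d S \<Longrightarrow> b \<in> gen_grp d S \<Longrightarrow> a * b \<in> gen_grp d S"
| inv: "a \<in> gen_grp d S \<Longrightarrow> b \<in> carrier_mat d d \<Longrightarrow> a * b = 1\<^sub>m d \<Longrightarrow> b \<in> gen_grp d S"

definition gen_a :: "nat \<Rightarrow> bit mat" where
  "gen_a n = (1\<^sub>m (2*n) + Eunit (2*n) 1 n) * (1\<^sub>m (2*n) + Eunit (2*n) (n+1) (2*n))
             * (1\<^sub>m (2*n) + Eunit (2*n) 1 (2*n))"

definition w_hat :: "nat \<Rightarrow> bit mat" where
  "w_hat n = mat (2*n) (2*n) (\<lambda>(r,c). let i = r + 1; j = c + 1 in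
     if (1 \<le> j \<and> j \<le> n - 1 \<and> i = j + 1) \<or> (i = 2*n \<and> j = n)
        \<or> (n + 2 \<le> j \<and> j \<le> 2*n \<and> i = j - 1) \<or> (i = 1 \<and> j = n + 1)
     then 1 else 0)"

end

theory Submission
  imports Defs "Jordan_Normal_Form.Determinant"
begin

text \<open>
  Relabel coordinates from \<open>0\<close> to \<open>2n-1\<close>, pairing \<open>i\<close> with \<open>i' = 2n-1-i\<close>; then Sp2 n is the group of
  matrices preserving the alternating form \<open>B(x,y) = \<Sum>\<^sub>i x\<^sub>i y\<^sub>i'\<close>. Every such matrix is a product of
  transvections \<open>T\<^sub>v x = x + B(x,v) v\<close>: multiplying by transvections whose centres avoid the coordinates
  already fixed, one makes it fix \<open>e\<^sub>k\<close> and \<open>e\<^sub>k'\<close> for \<open>k = 0, 1, \<dots>\<close> in turn.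
  So it suffices that all transvections lie in the group \<open>H\<close> generated by \<open>a\<close> and \<open>w\<close>.
  Here \<open>a = T\<^bsub>e\<^sub>n\<^esub> T\<^bsub>e\<^sub>n+e\<^sub>0\<^esub>\<close>, and \<open>w\<close> moves the unit vectors along a \<open>2n\<close>-cycle in which partners are
  \<open>n\<close> steps apart. Since \<open>g T\<^sub>v g\<^sup>-\<^sup>1 = T\<^bsub>gv\<^esub>\<close>, conjugating \<open>a\<close> by powers of \<open>w\<close> gives the products
  \<open>T\<^sub>u T\<^bsub>u+u'\<^esub>\<close> for cyclically adjacent unit vectors \<open>u, u'\<close>; the fifth power of a product of three of
  them is \<open>T\<^bsub>e\<^sub>1\<^esub>\<close>, so \<open>H\<close> contains every \<open>T\<^bsub>e\<^sub>i\<^esub>\<close> and every \<open>T\<^bsub>u+u'\<^esub>\<close>.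
  The set of centres \<open>v\<close> with \<open>T\<^sub>v \<in> H\<close> is closed under all \<open>T\<^sub>v\<close> it contains; starting from these,
  it grows to all \<open>e\<^sub>a + e\<^sub>b\<close> with \<open>b \<noteq> a, a'\<close>, and then, by induction on the support, to all vectors.
\<close>

text \<open>Z2 simplifies \<open>+\<close> and \<open>*\<close> on bits to boolean connectives; keep them as ring operations.\<close>

declare add_bit_eq_xor[simp del] mult_bit_eq_and[simp del]

lemma bit_add_self [simp]: "(x::bit) + x = 0"
  by (cases x) simp_all

lemma mult_mat_vec_carrier_square [simp]:
  "A \<in> carrier_mat d d \<Longrightarrow> x \<in> carrier_vec d \<Longrightarrow> A *\<^sub>v x \<in> carrier_vec d"
  by simp

lemma mult_carrier_mat_square [simp]:
  "A \<in> carrier_mat d d \<Longrightarrow> B \<in> carrier_mat d d \<Longrightarrow> A * B \<in> carrier_mat d d"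
  by simp

lemma assoc_mult_mat_vec_square [simp]:
  "A \<in> carrier_mat d d \<Longrightarrow> B \<in> carrier_mat d d \<Longrightarrow> x \<in> carrier_vec d \<Longrightarrow>
   (A * B) *\<^sub>v x = A *\<^sub>v (B *\<^sub>v x)"
  by (rule assoc_mult_mat_vec)

lemma eq_mat_by_mult_unit_vec:
  fixes A B :: "'a::comm_ring_1 mat"
  assumes "A \<in> carrier_mat d d" "B \<in> carrier_mat d d"
    and "\<And>j. j < d \<Longrightarrow> A *\<^sub>v unit_vec d j = B *\<^sub>v unit_vec d j"
  shows "A = B"
proof (rule eq_matI)
  fix i j assume "i < dim_row B" "j < dim_col B"
  with assms(1,2) have ij: "i < d" "j < d" and dims: "dim_row A = d" "dim_col A = d" by auto
  have "A $$ (i,j) = (A *\<^sub>v unit_vec d j) $ i"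
    using ij dims by simp
  also have "\<dots> = (B *\<^sub>v unit_vec d j) $ i" by (simp add: assms(3) ij)
  also have "\<dots> = B $$ (i,j)"
    using ij assms(2) by simp
  finally show "A $$ (i,j) = B $$ (i,j)" .
qed (use assms in auto)

lemma eq_mat_by_mult_vec:
  fixes A B :: "'a::comm_ring_1 mat"
  assumes "A \<in> carrier_mat d d" "B \<in> carrier_mat d d"
    and "\<And>x. x \<in> carrier_vec d \<Longrightarrow> A *\<^sub>v x = B *\<^sub>v x"
  shows "A = B"
  using assms by (intro eq_mat_by_mult_unit_vec) auto

section \<open>The symplectic form over GF(2)\<close>

text \<open>Coordinates \<open>i\<close> and \<open>d - 1 - i\<close> are paired, as in the Gram matrix Jmat.\<close>

definition symp_form :: "nat \<Rightarrow> bit vec \<Rightarrow> bit vec \<Rightarrow> bit" where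
  "symp_form d x y = (\<Sum>i<d. x$i * y$(d-1-i))"

lemma symp_form_commute: "symp_form d x y = symp_form d y x"
proof -
  have "symp_form d x y = (\<Sum>i<d. x$(d - Suc i) * y$(d-1-(d - Suc i)))"
    unfolding symp_form_def using sum.nat_diff_reindex[of "\<lambda>i. x$i * y$(d-1-i)" d] by simp
  also have "\<dots> = (\<Sum>i<d. y$i * x$(d-1-i))"
    by (intro sum.cong) (auto simp: mult.commute)
  finally show ?thesis unfolding symp_form_def .
qed

lemma symp_form_add_left:
  "x \<in> carrier_vec d \<Longrightarrow> y \<in> carrier_vec d \<Longrightarrow> symp_form d (x + y) z = symp_form d x z + symp_form d y z"
  unfolding symp_form_def by (simp add: distrib_right sum.distrib)

lemma symp_form_add_right:
  "y \<in> carrier_vec d \<Longrightarrow> z \<in> carrier_vec d \<Longrightarrow> symp_form d x (y + z) = symp_form d x y + symp_form d x z"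
  unfolding symp_form_def by (simp add: distrib_left sum.distrib)

lemma symp_form_smult_left: "x \<in> carrier_vec d \<Longrightarrow> symp_form d (c \<cdot>\<^sub>v x) z = c * symp_form d x z"
  unfolding symp_form_def by (simp add: sum_distrib_left ac_simps)

lemma symp_form_smult_right: "y \<in> carrier_vec d \<Longrightarrow> symp_form d x (c \<cdot>\<^sub>v y) = c * symp_form d x y"
  unfolding symp_form_def by (simp add: sum_distrib_left ac_simps)

lemma symp_form_unit_vec_left: "i < d \<Longrightarrow> symp_form d (unit_vec d i) y = y $ (d-1-i)"
proof -
  assume i: "i < d"
  have "symp_form d (unit_vec d i) y = (\<Sum>k<d. if k = i then y $ (d-1-k) else 0)"
    unfolding symp_form_def using i by (intro sum.cong) auto
  with i show ?thesis by simp
qed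

lemma symp_form_unit_vec_right: "j < d \<Longrightarrow> symp_form d x (unit_vec d j) = x $ (d-1-j)"
  by (simp add: symp_form_commute[of d x] symp_form_unit_vec_left)

lemma symp_form_zero_left: "symp_form d (0\<^sub>v d) y = 0"
  unfolding symp_form_def by simp

text \<open>The form is alternating because no coordinate of an even-dimensional space is its own partner.\<close>

lemma symp_form_self: "symp_form (2*n) x x = 0"
proof -
  let ?f = "\<lambda>i. x$i * x$(2*n-1-i)"
  have "symp_form (2*n) x x = sum ?f {0..<n} + sum ?f {n..<n+n}"
    unfolding symp_form_def by (simp add: sum.atLeastLessThan_concat mult_2 lessThan_atLeast0)
  also have "sum ?f {n..<n+n} = (\<Sum>i<n. ?f (i + n))"
    using sum.shift_bounds_nat_ivl[of ?f 0 n n] by (simp add: lessThan_atLeast0)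
  also have "\<dots> = (\<Sum>i<n. ?f (n - Suc i + n))"
    using sum.nat_diff_reindex[of "\<lambda>i. ?f (i + n)" n] by simp
  also have "\<dots> = sum ?f {0..<n}"
    unfolding lessThan_atLeast0 by (intro sum.cong) (auto simp: mult.commute mult_2 mult_2_right)
  finally show ?thesis by simp
qed

definition symplectic :: "nat \<Rightarrow> bit mat \<Rightarrow> bool" where
  "symplectic d X \<longleftrightarrow> X \<in> carrier_mat d d \<and>
     (\<forall>x\<in>carrier_vec d. \<forall>y\<in>carrier_vec d. symp_form d (X *\<^sub>v x) (X *\<^sub>v y) = symp_form d x y)"

lemma symplectic_carrier: "symplectic d X \<Longrightarrow> X \<in> carrier_mat d d"
  unfolding symplectic_def by auto

lemma symplectic_symp_form:
  "symplectic d X \<Longrightarrow> x \<in> carrier_vec d \<Longrightarrow> y \<in> carrier_vec d \<Longrightarrow>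
   symp_form d (X *\<^sub>v x) (X *\<^sub>v y) = symp_form d x y"
  unfolding symplectic_def by auto

lemma symplectic_one: "symplectic d (1\<^sub>m d)"
  unfolding symplectic_def by auto

lemma symplectic_mult: "symplectic d A \<Longrightarrow> symplectic d B \<Longrightarrow> symplectic d (A * B)"
  unfolding symplectic_def by (auto simp: assoc_mult_mat_vec[of _ d d])

lemma symplectic_right_inverse:
  assumes "symplectic d A" "B \<in> carrier_mat d d" "A * B = 1\<^sub>m d"
  shows "symplectic d B"
  unfolding symplectic_def
proof (intro conjI ballI)
  fix x y :: "bit vec" assume x: "x \<in> carrier_vec d" and y: "y \<in> carrier_vec d"
  have A: "A \<in> carrier_mat d d" by (rule symplectic_carrier[OF assms(1)])
  have "symp_form d (B *\<^sub>v x) (B *\<^sub>v y) = symp_form d (A *\<^sub>v (B *\<^sub>v x)) (A *\<^sub>v (B *\<^sub>v y))"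
    using assms x y by (simp add: symplectic_symp_form)
  also have "\<dots> = symp_form d ((A * B) *\<^sub>v x) ((A * B) *\<^sub>v y)"
    using A assms(2) x y by (simp add: assoc_mult_mat_vec[of _ d d])
  finally show "symp_form d (B *\<^sub>v x) (B *\<^sub>v y) = symp_form d x y"
    using assms(3) x y by simp
qed (rule assms(2))

section \<open>Symplectic transvections\<close>

definition transvection :: "nat \<Rightarrow> bit vec \<Rightarrow> bit mat" where
  "transvection d v = mat d d (\<lambda>(r,c). (if r = c then 1 else 0) + v$r * v$(d-1-c))"

lemma transvection_carrier [simp]: "transvection d v \<in> carrier_mat d d"
  by (simp add: transvection_def)

lemma transvection_dims [simp]: "dim_row (transvection d v) = d" "dim_col (transvection d v) = d"
  by (simp_all add: transvection_def)

lemma transvection_mult_vec: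
  assumes "v \<in> carrier_vec d" "x \<in> carrier_vec d"
  shows "transvection d v *\<^sub>v x = x + symp_form d x v \<cdot>\<^sub>v v"
proof (rule eq_vecI)
  fix i assume "i < dim_vec (x + symp_form d x v \<cdot>\<^sub>v v)"
  with assms have i: "i < d" by simp
  have "(transvection d v *\<^sub>v x) $ i = (\<Sum>c<d. ((if i = c then 1 else 0) + v$i * v$(d-1-c)) * x$c)"
    using i assms by (simp add: transvection_def scalar_prod_def lessThan_atLeast0)
  also have "\<dots> = (\<Sum>c<d. (if i = c then x$c else 0) + v$i * (x$c * v$(d-1-c)))"
    by (rule sum.cong) (auto simp: distrib_right distrib_left ac_simps)
  also have "\<dots> = x$i + v$i * symp_form d x v"
    using i by (simp add: sum.distrib sum_distrib_left symp_form_def)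
  finally show "(transvection d v *\<^sub>v x) $ i = (x + symp_form d x v \<cdot>\<^sub>v v) $ i"
    using i assms by (simp add: ac_simps)
qed (use assms in \<open>simp add: transvection_def\<close>)

lemma transvection_unit_vec_mult_vec:
  "x \<in> carrier_vec d \<Longrightarrow> i < d \<Longrightarrow> transvection d (unit_vec d i) *\<^sub>v x = x + x $ (d-1-i) \<cdot>\<^sub>v unit_vec d i"
  by (simp add: transvection_mult_vec symp_form_unit_vec_right)

lemma transvection_unit_vec_pair_mult_vec:
  "x \<in> carrier_vec d \<Longrightarrow> i < d \<Longrightarrow> j < d \<Longrightarrow>
   transvection d (unit_vec d i + unit_vec d j) *\<^sub>v x
     = x + (x $ (d-1-i) + x $ (d-1-j)) \<cdot>\<^sub>v (unit_vec d i + unit_vec d j)"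
  by (simp add: transvection_mult_vec symp_form_add_right symp_form_unit_vec_right)

lemma transvection_zero: "transvection d (0\<^sub>v d) = 1\<^sub>m d"
  by (intro eq_matI) (auto simp: transvection_def)

lemma transvection_fixes:
  "x \<in> carrier_vec d \<Longrightarrow> w \<in> carrier_vec d \<Longrightarrow> symp_form d x w = 0 \<Longrightarrow> transvection d w *\<^sub>v x = x"
  by (simp add: transvection_mult_vec) (intro eq_vecI, auto)

lemma transvection_moves:
  assumes u: "u \<in> carrier_vec (2*n)" and z: "z \<in> carrier_vec (2*n)" and uz: "symp_form (2*n) u z = 1"
  shows "transvection (2*n) (u + z) *\<^sub>v u = z"
proof -
  have "symp_form (2*n) u (u + z) = 1"
    using u z uz by (simp add: symp_form_add_right symp_form_self)
  hence "transvection (2*n) (u + z) *\<^sub>v u = u + (u + z)"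
    using u z by (simp add: transvection_mult_vec)
  also have "\<dots> = z" using u z by (intro eq_vecI) (auto simp: add.assoc[symmetric])
  finally show ?thesis .
qed

lemma symplectic_transvection:
  assumes u: "u \<in> carrier_vec (2*n)"
  shows "symplectic (2*n) (transvection (2*n) u)"
  unfolding symplectic_def
proof (intro conjI ballI)
  fix x y :: "bit vec" assume x: "x \<in> carrier_vec (2*n)" and y: "y \<in> carrier_vec (2*n)"
  let ?B = "symp_form (2*n)"
  have uu: "?B u u = 0" by (rule symp_form_self)
  have "?B (transvection (2*n) u *\<^sub>v x) (transvection (2*n) u *\<^sub>v y)
      = ?B x y + ?B y u * ?B x u + ?B x u * (?B u y + ?B y u * ?B u u)"
    using x y u by (simp add: transvection_mult_vec symp_form_add_left symp_form_add_right
        symp_form_smult_left symp_form_smult_right algebra_simps)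
  also have "\<dots> = ?B x y"
    using symp_form_commute[of "2*n" u y] uu by (simp add: algebra_simps)
  finally show "?B (transvection (2*n) u *\<^sub>v x) (transvection (2*n) u *\<^sub>v y) = ?B x y" .
qed simp

lemma transvection_mult_vec_involution:
  assumes u: "u \<in> carrier_vec (2*n)" and x: "x \<in> carrier_vec (2*n)"
  shows "transvection (2*n) u *\<^sub>v (transvection (2*n) u *\<^sub>v x) = x"
proof -
  have "transvection (2*n) u *\<^sub>v (transvection (2*n) u *\<^sub>v x)
      = x + symp_form (2*n) x u \<cdot>\<^sub>v u + (symp_form (2*n) x u + symp_form (2*n) x u * symp_form (2*n) u u) \<cdot>\<^sub>v u"
    using x u by (simp add: transvection_mult_vec symp_form_add_left symp_form_smult_left)
  also have "\<dots> = x"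
    using x u symp_form_self[of n u] by (intro eq_vecI) (auto simp: algebra_simps)
  finally show ?thesis .
qed

lemma transvection_involution:
  assumes u: "u \<in> carrier_vec (2*n)"
  shows "transvection (2*n) u * transvection (2*n) u = 1\<^sub>m (2*n)"
proof (rule eq_mat_by_mult_vec[where d="2*n"])
  fix x :: "bit vec" assume "x \<in> carrier_vec (2*n)"
  then show "(transvection (2*n) u * transvection (2*n) u) *\<^sub>v x = 1\<^sub>m (2*n) *\<^sub>v x"
    using u by (simp add: assoc_mult_mat_vec_square[of _ "2*n"] transvection_mult_vec_involution)
qed auto

lemma symplectic_transvection_mult_vec:
  assumes g: "symplectic d g" and u: "u \<in> carrier_vec d" and y: "y \<in> carrier_vec d"
  shows "g *\<^sub>v (transvection d u *\<^sub>v y) = transvection d (g *\<^sub>v u) *\<^sub>v (g *\<^sub>v y)"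
proof -
  have gc: "g \<in> carrier_mat d d" by (rule symplectic_carrier[OF g])
  show ?thesis
    using gc u y symplectic_symp_form[OF g y u]
    by (simp add: transvection_mult_vec mult_add_distrib_mat_vec mult_mat_vec)
qed

lemma Jmat_carrier [simp]: "Jmat n \<in> carrier_mat (2*n) (2*n)"
  by (simp add: Jmat_def)

lemma Jmat_dims [simp]: "dim_row (Jmat n) = 2*n" "dim_col (Jmat n) = 2*n"
  by (simp_all add: Jmat_def)

lemma Jmat_mult_vec:
  assumes y: "y \<in> carrier_vec (2*n)"
  shows "Jmat n *\<^sub>v y = vec (2*n) (\<lambda>r. y $ (2*n-1-r))"
proof (rule eq_vecI)
  fix r assume "r < dim_vec (vec (2*n) (\<lambda>r. y $ (2*n-1-r)))"
  hence r: "r < 2*n" by simp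
  have "(Jmat n *\<^sub>v y) $ r = (\<Sum>c\<in>{0..<2*n}. (if r + c = 2*n-1 then 1 else 0) * y $ c)"
    using r y by (simp add: Jmat_def scalar_prod_def)
  also have "\<dots> = (\<Sum>c\<in>{0..<2*n}. if c = 2*n-1-r then y $ c else 0)"
    using r by (intro sum.cong) auto
  also have "\<dots> = y $ (2*n-1-r)" using r by simp
  finally show "(Jmat n *\<^sub>v y) $ r = vec (2*n) (\<lambda>r. y $ (2*n-1-r)) $ r" using r by simp
qed (use y in \<open>simp add: Jmat_def\<close>)

lemma scalar_prod_Jmat:
  "x \<in> carrier_vec (2*n) \<Longrightarrow> y \<in> carrier_vec (2*n) \<Longrightarrow> x \<bullet> (Jmat n *\<^sub>v y) = symp_form (2*n) x y"
  by (simp add: Jmat_mult_vec scalar_prod_def symp_form_def lessThan_atLeast0)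

lemma Jmat_involution: "Jmat n * Jmat n = 1\<^sub>m (2*n)"
proof (rule eq_mat_by_mult_vec[where d="2*n"])
  fix x :: "bit vec" assume x: "x \<in> carrier_vec (2*n)"
  then have "Jmat n *\<^sub>v x \<in> carrier_vec (2*n)" by simp
  with x show "(Jmat n * Jmat n) *\<^sub>v x = 1\<^sub>m (2*n) *\<^sub>v x"
    by (simp add: Jmat_mult_vec assoc_mult_mat_vec_square[of _ "2*n"]) (intro eq_vecI, auto)
qed auto

lemma Sp2_iff_symplectic: "X \<in> Sp2 n \<longleftrightarrow> symplectic (2*n) X"
proof
  assume "X \<in> Sp2 n"
  hence X: "X \<in> carrier_mat (2*n) (2*n)" and XJX: "transpose_mat X * Jmat n * X = Jmat n"
    unfolding Sp2_def by auto
  show "symplectic (2*n) X" unfolding symplectic_def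
  proof (intro conjI ballI X)
    fix x y :: "bit vec" assume x: "x \<in> carrier_vec (2*n)" and y: "y \<in> carrier_vec (2*n)"
    have "symp_form (2*n) (X *\<^sub>v x) (X *\<^sub>v y) = (X *\<^sub>v x) \<bullet> (Jmat n *\<^sub>v (X *\<^sub>v y))"
      using x y X by (simp add: scalar_prod_Jmat)
    also have "\<dots> = (Jmat n *\<^sub>v (X *\<^sub>v y)) \<bullet> (X *\<^sub>v x)"
      using x y X by (intro comm_scalar_prod[of _ "2*n"]) auto
    also have "\<dots> = (transpose_mat X *\<^sub>v (Jmat n *\<^sub>v (X *\<^sub>v y))) \<bullet> x"
      using x y X by (intro transpose_vec_mult_scalar[symmetric]) auto
    also have "transpose_mat X *\<^sub>v (Jmat n *\<^sub>v (X *\<^sub>v y)) = (transpose_mat X * Jmat n * X) *\<^sub>v y"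
      using X y by (simp add: assoc_mult_mat_vec[of _ "2*n" "2*n" _ "2*n"])
    also have "\<dots> = Jmat n *\<^sub>v y" using XJX by simp
    also have "(Jmat n *\<^sub>v y) \<bullet> x = x \<bullet> (Jmat n *\<^sub>v y)"
      using x y by (intro comm_scalar_prod[of _ "2*n"]) auto
    also have "\<dots> = symp_form (2*n) x y"
      using x y by (simp add: scalar_prod_Jmat)
    finally show "symp_form (2*n) (X *\<^sub>v x) (X *\<^sub>v y) = symp_form (2*n) x y" .
  qed
next
  assume S: "symplectic (2*n) X"
  hence X: "X \<in> carrier_mat (2*n) (2*n)" by (rule symplectic_carrier)
  have "transpose_mat X * Jmat n * X = Jmat n"
  proof (rule eq_mat_by_mult_vec[where d="2*n"])
    fix y :: "bit vec" assume y: "y \<in> carrier_vec (2*n)"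
    show "(transpose_mat X * Jmat n * X) *\<^sub>v y = Jmat n *\<^sub>v y"
    proof (rule eq_vecI)
      fix i assume "i < dim_vec (Jmat n *\<^sub>v y)"
      hence i: "i < 2*n" by simp
      let ?e = "unit_vec (2*n) i :: bit vec"
      have "((transpose_mat X * Jmat n * X) *\<^sub>v y) $ i
          = ?e \<bullet> (transpose_mat X *\<^sub>v (Jmat n *\<^sub>v (X *\<^sub>v y)))"
        using X y i by (simp add: assoc_mult_mat_vec[of _ "2*n" "2*n" _ "2*n"])
      also have "\<dots> = (transpose_mat (transpose_mat X) *\<^sub>v ?e) \<bullet> (Jmat n *\<^sub>v (X *\<^sub>v y))"
        using X y by (intro transpose_vec_mult_scalar[symmetric]) auto
      also have "\<dots> = symp_form (2*n) ?e y"
        using X y S by (simp add: scalar_prod_Jmat symplectic_symp_form)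
      also have "\<dots> = ?e \<bullet> (Jmat n *\<^sub>v y)"
        using y by (simp add: scalar_prod_Jmat)
      also have "\<dots> = (Jmat n *\<^sub>v y) $ i"
        using y i by simp
      finally show "((transpose_mat X * Jmat n * X) *\<^sub>v y) $ i = (Jmat n *\<^sub>v y) $ i" .
    qed (use X in auto)
  qed (use X in auto)
  with X show "X \<in> Sp2 n" unfolding Sp2_def by auto
qed

lemma symplectic_right_inverse_Jmat:
  assumes S: "symplectic (2*n) X"
  shows "X * (Jmat n * transpose_mat X * Jmat n) = 1\<^sub>m (2*n)"
proof (rule mat_mult_left_right_inverse)
  show X: "X \<in> carrier_mat (2*n) (2*n)" by (rule symplectic_carrier[OF S])
  then show Y: "Jmat n * transpose_mat X * Jmat n \<in> carrier_mat (2*n) (2*n)"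
    by (intro mult_carrier_mat[of _ "2*n" "2*n"]) auto
  have XJX: "transpose_mat X * Jmat n * X = Jmat n"
    using S unfolding Sp2_iff_symplectic[symmetric] Sp2_def by auto
  have "(Jmat n * transpose_mat X * Jmat n) * X = Jmat n * (transpose_mat X * Jmat n * X)"
    using X by (simp add: assoc_mult_mat[of _ "2*n" "2*n" _ "2*n" _ "2*n"])
  also have "\<dots> = 1\<^sub>m (2*n)" by (simp add: XJX Jmat_involution)
  finally show "Jmat n * transpose_mat X * Jmat n * X = 1\<^sub>m (2*n)" .
qed

lemma gen_grp_symplectic:
  assumes S: "\<And>s. s \<in> S \<Longrightarrow> symplectic (2*n) s" and g: "g \<in> gen_grp (2*n) S"
  shows "symplectic (2*n) g"
  using g
proof (induction rule: gen_grp.induct)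
  case (inv a b)
  then show ?case by (blast intro: symplectic_right_inverse)
qed (auto intro: symplectic_one symplectic_mult S)

lemma gen_grp_conj_transvection_pair:
  assumes S: "\<And>s. s \<in> S \<Longrightarrow> symplectic (2*n) s" and g: "g \<in> gen_grp (2*n) S"
    and T: "transvection (2*n) u * transvection (2*n) v \<in> gen_grp (2*n) S"
    and u: "u \<in> carrier_vec (2*n)" and v: "v \<in> carrier_vec (2*n)"
  shows "transvection (2*n) (g *\<^sub>v u) * transvection (2*n) (g *\<^sub>v v) \<in> gen_grp (2*n) S"
proof -
  have gS: "symplectic (2*n) g" by (rule gen_grp_symplectic[OF S g])
  have gc: "g \<in> carrier_mat (2*n) (2*n)" by (rule symplectic_carrier[OF gS])
  define h where "h = Jmat n * transpose_mat g * Jmat n"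
  have hc: "h \<in> carrier_mat (2*n) (2*n)" using gc unfolding h_def by simp
  have gh: "g * h = 1\<^sub>m (2*n)" unfolding h_def by (rule symplectic_right_inverse_Jmat[OF gS])
  have "g * (transvection (2*n) u * transvection (2*n) v) * h
      = transvection (2*n) (g *\<^sub>v u) * transvection (2*n) (g *\<^sub>v v)"
  proof (rule eq_mat_by_mult_vec[where d="2*n"])
    fix x :: "bit vec" assume x: "x \<in> carrier_vec (2*n)"
    have ghx: "g *\<^sub>v (h *\<^sub>v x) = x"
      using gh gc hc x by (metis assoc_mult_mat_vec one_mult_mat_vec)
    show "(g * (transvection (2*n) u * transvection (2*n) v) * h) *\<^sub>v x
        = (transvection (2*n) (g *\<^sub>v u) * transvection (2*n) (g *\<^sub>v v)) *\<^sub>v x"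
      using gc hc x u v gS
      by (simp add: assoc_mult_mat_vec_square[of _ "2*n"] symplectic_transvection_mult_vec ghx)
  qed (use gc hc in auto)
  moreover have "g * (transvection (2*n) u * transvection (2*n) v) * h \<in> gen_grp (2*n) S"
    by (intro gen_grp.mult T g gen_grp.inv[OF g hc gh])
  ultimately show ?thesis by simp
qed

lemma gen_grp_conj_transvection:
  assumes S: "\<And>s. s \<in> S \<Longrightarrow> symplectic (2*n) s" and g: "g \<in> gen_grp (2*n) S"
    and T: "transvection (2*n) u \<in> gen_grp (2*n) S" and u: "u \<in> carrier_vec (2*n)"
  shows "transvection (2*n) (g *\<^sub>v u) \<in> gen_grp (2*n) S"
proof -
  have gc: "g \<in> carrier_mat (2*n) (2*n)" by (rule symplectic_carrier[OF gen_grp_symplectic[OF S g]])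
  have "g *\<^sub>v 0\<^sub>v (2*n) = 0\<^sub>v (2*n)" using gc by (intro eq_vecI) auto
  with gen_grp_conj_transvection_pair[OF S g _ u, of "0\<^sub>v (2*n)"] T show ?thesis
    by (simp add: transvection_zero)
qed

lemma gen_grp_transvection_cancel:
  assumes T: "transvection (2*n) y \<in> gen_grp (2*n) S" and y: "y \<in> carrier_vec (2*n)"
    and X: "X \<in> carrier_mat (2*n) (2*n)" and TX: "transvection (2*n) y * X \<in> gen_grp (2*n) S"
  shows "X \<in> gen_grp (2*n) S"
proof -
  have "transvection (2*n) y * (transvection (2*n) y * X) = X"
    using transvection_involution[OF y] X
    by (simp add: assoc_mult_mat[of _ "2*n" "2*n" _ "2*n" _ "2*n", symmetric])
  with gen_grp.mult[OF T TX] show ?thesis by simp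
qed

lemma Eunit_carrier [simp]: "Eunit d i j \<in> carrier_mat d d"
  by (simp add: Eunit_def)

lemma one_plus_Eunit_mult_vec:
  assumes "1 \<le> i" "i \<le> d" "1 \<le> j" "j \<le> d" "x \<in> carrier_vec d"
  shows "(1\<^sub>m d + Eunit d i j) *\<^sub>v x = x + x $ (j-1) \<cdot>\<^sub>v unit_vec d (i-1)"
proof (rule eq_vecI)
  fix r assume "r < dim_vec (x + x $ (j-1) \<cdot>\<^sub>v unit_vec d (i-1))"
  hence r: "r < d" by simp
  have "((1\<^sub>m d + Eunit d i j) *\<^sub>v x) $ r
      = (\<Sum>c\<in>{0..<d}. ((if c = r then 1 else 0) + (if r + 1 = i \<and> c + 1 = j then 1 else 0)) * x $ c)"
    using r assms by (simp add: Eunit_def scalar_prod_def)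
  also have "\<dots> = (\<Sum>c\<in>{0..<d}. (if c = r then x $ c else 0)
                     + (if c = j - 1 then (if r + 1 = i then x $ c else 0) else 0))"
    using assms by (intro sum.cong) (auto simp: distrib_right)
  also have "\<dots> = x $ r + (if r + 1 = i then x $ (j-1) else 0)"
    using r assms by (simp add: sum.distrib) (use assms in linarith)
  finally show "((1\<^sub>m d + Eunit d i j) *\<^sub>v x) $ r = (x + x $ (j-1) \<cdot>\<^sub>v unit_vec d (i-1)) $ r"
    using r assms by auto
qed (use assms in \<open>auto simp: Eunit_def\<close>)

lemma gen_a_eq_transvections:
  assumes n: "n > 2"
  shows "gen_a n = transvection (2*n) (unit_vec (2*n) n)
                 * transvection (2*n) (unit_vec (2*n) n + unit_vec (2*n) 0)"
proof (rule eq_mat_by_mult_vec[where d="2*n"])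
  fix x :: "bit vec" assume x: "x \<in> carrier_vec (2*n)"
  let ?E = "\<lambda>i j. 1\<^sub>m (2*n) + Eunit (2*n) i j"
  let ?e = "unit_vec (2*n)" and ?a = "x $ (n-1)" and ?b = "x $ (2*n-1)"
  let ?T = "transvection (2*n)"
  have idx: "n - 1 < 2*n" "2*n - 1 < 2*n" "n - 1 \<noteq> 0" "n - 1 \<noteq> n" "2*n - 1 \<noteq> 0" "2*n - 1 \<noteq> n"
    "2*n - 1 - n = n - 1" "n < 2*n" "0 < 2*n"
    using n by auto
  have "gen_a n *\<^sub>v x = ?E 1 n *\<^sub>v (?E (n+1) (2*n) *\<^sub>v (?E 1 (2*n) *\<^sub>v x))"
    unfolding gen_a_def using x by (simp add: assoc_mult_mat_vec_square[of _ "2*n"])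
  also have "\<dots> = x + (?a + ?b) \<cdot>\<^sub>v ?e 0 + ?b \<cdot>\<^sub>v ?e n"
    using n x idx by (simp add: one_plus_Eunit_mult_vec) (intro eq_vecI, simp_all add: algebra_simps)
  also have "\<dots> = ?T (?e n) *\<^sub>v (?T (?e n + ?e 0) *\<^sub>v x)"
    using x idx
    by (simp add: transvection_unit_vec_mult_vec transvection_unit_vec_pair_mult_vec)
      (intro eq_vecI, simp_all add: algebra_simps)
  finally show "gen_a n *\<^sub>v x = (?T (?e n) * ?T (?e n + ?e 0)) *\<^sub>v x"
    using x by (simp add: assoc_mult_mat_vec_square[of _ "2*n"])
qed (auto simp: gen_a_def)

lemma symplectic_gen_a: "n > 2 \<Longrightarrow> symplectic (2*n) (gen_a n)"
  by (simp add: gen_a_eq_transvections symplectic_mult symplectic_transvection)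

text \<open>w_hat sends \<open>e\<^sub>c\<close> to \<open>e\<^bsub>w_perm n c\<^esub>\<close>.\<close>

definition w_perm :: "nat \<Rightarrow> nat \<Rightarrow> nat" where
  "w_perm n c = (if c + 1 < n then c + 1 else if c + 1 = n then 2*n - 1 else if c = n then 0 else c - 1)"

definition w_perm_inv :: "nat \<Rightarrow> nat \<Rightarrow> nat" where
  "w_perm_inv n r = (if r = 0 then n else if r < n then r - 1 else if r = 2*n - 1 then n - 1 else r + 1)"

lemma w_perm_less: "n > 2 \<Longrightarrow> c < 2*n \<Longrightarrow> w_perm n c < 2*n"
  by (auto simp: w_perm_def)

lemma w_perm_inv_less: "n > 2 \<Longrightarrow> r < 2*n \<Longrightarrow> w_perm_inv n r < 2*n"
  by (auto simp: w_perm_inv_def)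

lemma w_perm_w_perm_inv: "n > 2 \<Longrightarrow> r < 2*n \<Longrightarrow> w_perm n (w_perm_inv n r) = r"
  by (auto simp: w_perm_def w_perm_inv_def)

lemma w_perm_inv_w_perm: "n > 2 \<Longrightarrow> c < 2*n \<Longrightarrow> w_perm_inv n (w_perm n c) = c"
  by (auto simp: w_perm_def w_perm_inv_def)

lemma w_perm_inv_partner: "n > 2 \<Longrightarrow> r < 2*n \<Longrightarrow> w_perm_inv n (2*n-1-r) = 2*n-1 - w_perm_inv n r"
  by (auto simp: w_perm_inv_def)

lemma w_hat_eq:
  assumes n: "n > 2"
  shows "w_hat n = mat (2*n) (2*n) (\<lambda>(r,c). if r = w_perm n c then 1 else 0)"
proof (rule eq_matI)
  fix r c assume "r < dim_row (mat (2*n) (2*n) (\<lambda>(r,c). if r = w_perm n c then (1::bit) else 0))"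
    "c < dim_col (mat (2*n) (2*n) (\<lambda>(r,c). if r = w_perm n c then (1::bit) else 0))"
  hence rc: "r < 2*n" "c < 2*n" by auto
  have "((1 \<le> c+1 \<and> c+1 \<le> n - 1 \<and> r+1 = c+1 + 1) \<or> (r+1 = 2*n \<and> c+1 = n)
        \<or> (n + 2 \<le> c+1 \<and> c+1 \<le> 2*n \<and> r+1 = c+1 - 1) \<or> (r+1 = 1 \<and> c+1 = n + 1)) \<longleftrightarrow> r = w_perm n c"
    using n rc unfolding w_perm_def by auto
  with rc show "w_hat n $$ (r, c) = mat (2*n) (2*n) (\<lambda>(r,c). if r = w_perm n c then (1::bit) else 0) $$ (r, c)"
    unfolding w_hat_def by (simp add: Let_def)
qed (auto simp: w_hat_def)

lemma w_hat_carrier [simp]: "w_hat n \<in> carrier_mat (2*n) (2*n)"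
  by (simp add: w_hat_def)

lemma w_hat_mult_vec:
  assumes n: "n > 2" and x: "x \<in> carrier_vec (2*n)"
  shows "w_hat n *\<^sub>v x = vec (2*n) (\<lambda>r. x $ w_perm_inv n r)"
proof (rule eq_vecI)
  fix r assume "r < dim_vec (vec (2*n) (\<lambda>r. x $ w_perm_inv n r))"
  hence r: "r < 2*n" by simp
  have "(w_hat n *\<^sub>v x) $ r = (\<Sum>c\<in>{0..<2*n}. (if r = w_perm n c then 1 else 0) * x $ c)"
    using r x by (simp add: w_hat_eq[OF n] scalar_prod_def)
  also have "\<dots> = (\<Sum>c\<in>{0..<2*n}. if c = w_perm_inv n r then x $ c else 0)"
    using n r by (intro sum.cong) (auto simp: w_perm_w_perm_inv w_perm_inv_w_perm)
  also have "\<dots> = x $ w_perm_inv n r" using w_perm_inv_less[OF n r] by simp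
  finally show "(w_hat n *\<^sub>v x) $ r = vec (2*n) (\<lambda>r. x $ w_perm_inv n r) $ r" using r by simp
qed (use x in \<open>simp add: w_hat_def\<close>)

lemma symplectic_w_hat:
  assumes n: "n > 2"
  shows "symplectic (2*n) (w_hat n)"
  unfolding symplectic_def
proof (intro conjI ballI)
  fix x y :: "bit vec" assume x: "x \<in> carrier_vec (2*n)" and y: "y \<in> carrier_vec (2*n)"
  have "symp_form (2*n) (w_hat n *\<^sub>v x) (w_hat n *\<^sub>v y)
      = (\<Sum>i<2*n. x $ w_perm_inv n i * y $ w_perm_inv n (2*n-1-i))"
    unfolding symp_form_def using x y by (simp add: w_hat_mult_vec[OF n])
  also have "\<dots> = (\<Sum>i<2*n. x $ w_perm_inv n i * y $ (2*n-1 - w_perm_inv n i))"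
    using n by (intro sum.cong) (auto simp: w_perm_inv_partner[simplified])
  also have "\<dots> = (\<Sum>i<2*n. x $ i * y $ (2*n-1-i))"
    using n by (intro sum.reindex_bij_witness[where i="w_perm n" and j="w_perm_inv n"])
      (auto simp: w_perm_w_perm_inv w_perm_inv_w_perm w_perm_less w_perm_inv_less)
  finally show "symp_form (2*n) (w_hat n *\<^sub>v x) (w_hat n *\<^sub>v y) = symp_form (2*n) x y"
    unfolding symp_form_def .
qed simp

lemma w_hat_mult_unit_vec:
  "n > 2 \<Longrightarrow> k < 2*n \<Longrightarrow> w_hat n *\<^sub>v unit_vec (2*n) k = unit_vec (2*n) (w_perm n k)"
  by (intro eq_vecI)
    (auto simp: w_hat_mult_vec w_perm_inv_less w_perm_less w_perm_w_perm_inv w_perm_inv_w_perm)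

text \<open>\<open>cycle_pos n j\<close> is the \<open>j\<close>-th coordinate visited by w_hat, starting from coordinate
  \<open>n\<close>; the coordinate paired with it by the form is reached \<open>n\<close> steps later.\<close>

definition cycle_pos :: "nat \<Rightarrow> nat \<Rightarrow> nat" where
  "cycle_pos n j = (let m = j mod (2*n) in if m = 0 then n else if m \<le> n then m - 1 else 3*n - m)"

lemma cycle_pos_less: "n > 0 \<Longrightarrow> cycle_pos n j < 2*n"
proof -
  assume n: "n > 0"
  have "j mod (2*n) < 2*n" using n by simp
  thus ?thesis using n unfolding cycle_pos_def Let_def by auto
qed

lemma cycle_pos_mod: "cycle_pos n (j mod (2*n)) = cycle_pos n j"
  by (simp add: cycle_pos_def)

lemma cycle_pos_add_period: "cycle_pos n (j + 2*n) = cycle_pos n j"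
  by (simp add: cycle_pos_def)

lemma cycle_pos_small:
  "n > 2 \<Longrightarrow> cycle_pos n 0 = n" "n > 2 \<Longrightarrow> cycle_pos n (Suc 0) = 0"
  "n > 2 \<Longrightarrow> cycle_pos n (Suc (Suc 0)) = 1" "n > 2 \<Longrightarrow> cycle_pos n n = n - 1"
  "n > 2 \<Longrightarrow> cycle_pos n (Suc n) = 2*n - 1"
  by (auto simp: cycle_pos_def)

lemma w_perm_cycle_pos:
  assumes n: "n > 2"
  shows "w_perm n (cycle_pos n j) = cycle_pos n (Suc j)"
proof -
  define m where "m = j mod (2*n)"
  have ml: "m < 2*n" using n unfolding m_def by simp
  have sm: "Suc j mod (2*n) = (if Suc m = 2*n then 0 else Suc m)"
    unfolding m_def by (simp add: mod_Suc)
  have "cycle_pos n j = (if m = 0 then n else if m \<le> n then m - 1 else 3*n - m)"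
    unfolding cycle_pos_def m_def by simp
  moreover have "cycle_pos n (Suc j) = (if Suc m = 2*n then n else if Suc m \<le> n then m else 3*n - Suc m)"
    unfolding cycle_pos_def Let_def sm by simp
  ultimately show ?thesis unfolding w_perm_def using ml n by auto
qed

lemma cycle_pos_add_half:
  assumes n: "n > 2"
  shows "cycle_pos n (j + n) = 2*n - 1 - cycle_pos n j"
proof -
  define m where "m = j mod (2*n)"
  have ml: "m < 2*n" using n unfolding m_def by simp
  have "(j + n) mod (2*n) = (m + n) mod (2*n)"
    unfolding m_def by (simp add: mod_add_left_eq)
  also have "\<dots> = (if m < n then m + n else m - n)"
  proof (cases "m < n")
    case False
    hence "m + n = (m - n) + 2*n" by simp
    then have "(m + n) mod (2*n) = (m - n) mod (2*n)" by (metis mod_add_self2)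
    with False ml show ?thesis by simp
  qed (use ml in simp)
  finally have sm: "(j + n) mod (2*n) = (if m < n then m + n else m - n)" .
  have pos: "cycle_pos n j = (if m = 0 then n else if m \<le> n then m - 1 else 3*n - m)"
    unfolding cycle_pos_def m_def by simp
  show ?thesis
  proof (cases "m < n")
    case True
    then have "cycle_pos n (j + n) = (if m + n \<le> n then m + n - 1 else 3*n - (m + n))"
      unfolding cycle_pos_def Let_def sm using n by simp
    with True n show ?thesis unfolding pos by (cases "m = 0") auto
  next
    case False
    then have "cycle_pos n (j + n) = (if m - n = 0 then n else m - n - 1)"
      unfolding cycle_pos_def Let_def sm using n ml by auto
    with False n ml show ?thesis unfolding pos by (cases "m = n") auto
  qed
qed

lemma cycle_pos_surj:
  assumes n: "n > 2" and i: "i < 2*n"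
  shows "\<exists>j<2*n. cycle_pos n j = i"
proof -
  define j where "j = (if i = n then 0 else if i < n then i + 1 else 3*n - i)"
  have j: "j < 2*n" using n i unfolding j_def by auto
  then have "cycle_pos n j = i" unfolding cycle_pos_def Let_def using n i unfolding j_def by auto
  with j show ?thesis by blast
qed

lemma cycle_pos_inj:
  assumes n: "n > 2" and a: "a < 2*n" and b: "b < 2*n" and e: "cycle_pos n a = cycle_pos n b"
  shows "a = b"
proof -
  have "cycle_pos n a = (if a = 0 then n else if a \<le> n then a - 1 else 3*n - a)"
       "cycle_pos n b = (if b = 0 then n else if b \<le> n then b - 1 else 3*n - b)"
    unfolding cycle_pos_def using a b by simp_all
  thus ?thesis using e a b n by (simp split: if_splits)
qed

lemma mod_add_neq:
  fixes s k N :: nat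
  assumes "0 < k" "k < N"
  shows "(s + k) mod N \<noteq> s mod N"
proof
  assume "(s + k) mod N = s mod N"
  then have "N dvd k" using mod_eq_dvd_iff_nat[of s "s + k" N] by simp
  with assms show False by (auto dest: dvd_imp_le)
qed

lemma cycle_pos_add_neq:
  assumes n: "n > 2" and k: "0 < k" "k < 2*n"
  shows "cycle_pos n (s + k) \<noteq> cycle_pos n s"
proof
  assume "cycle_pos n (s + k) = cycle_pos n s"
  then have "cycle_pos n ((s + k) mod (2*n)) = cycle_pos n (s mod (2*n))"
    by (simp only: cycle_pos_mod)
  moreover have "(s + k) mod (2*n) < 2*n" "s mod (2*n) < 2*n" using n by simp_all
  ultimately have "(s + k) mod (2*n) = s mod (2*n)" using cycle_pos_inj[OF n] by blast
  with mod_add_neq[OF k] show False by blast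
qed

lemma w_hat_mult_cycle_unit_vec:
  "n > 2 \<Longrightarrow> w_hat n *\<^sub>v unit_vec (2*n) (cycle_pos n j) = unit_vec (2*n) (cycle_pos n (Suc j))"
  by (simp add: w_hat_mult_unit_vec cycle_pos_less w_perm_cycle_pos)

section \<open>A word in the generators equal to a transvection\<close>

text \<open>All transvections in the word below have their centres in the span of \<open>e\<^sub>0, e\<^sub>1, e\<^bsub>n-1\<^esub>, e\<^sub>n,
  e\<^bsub>2n-1\<^esub>\<close>, so each of them adds to a vector only multiples of these five unit vectors.
  \<open>word_state n x c\<^sub>0 c\<^sub>1 c\<^sub>m c\<^sub>n c\<^sub>q\<close> is \<open>x\<close> with such multiples added.\<close>

definition word_state :: "nat \<Rightarrow> bit vec \<Rightarrow> bit \<Rightarrow> bit \<Rightarrow> bit \<Rightarrow> bit \<Rightarrow> bit \<Rightarrow> bit vec" where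
  "word_state n x c0 c1 cm cn cq = vec (2*n) (\<lambda>i. x$i +
     (if i = 0 then c0 else if i = 1 then c1 else if i = n - 1 then cm
      else if i = n then cn else if i = 2*n - 1 then cq else 0))"

context
  fixes n :: nat and x :: "bit vec"
  assumes n: "n > 2" and x: "x \<in> carrier_vec (2*n)"
begin

private abbreviation (input) e :: "nat \<Rightarrow> bit vec" where "e \<equiv> unit_vec (2*n)"
private abbreviation (input) T :: "bit vec \<Rightarrow> bit mat" where "T \<equiv> transvection (2*n)"
private abbreviation (input) S :: "bit \<Rightarrow> bit \<Rightarrow> bit \<Rightarrow> bit \<Rightarrow> bit \<Rightarrow> bit vec" where
  "S \<equiv> word_state n x"

private lemma word_state_carrier: "S c0 c1 cm cn cq \<in> carrier_vec (2*n)"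
  by (simp add: word_state_def)

private lemma word_state_transvection_unit:
  assumes "j < 2*n" "2*n-1-j = p"
  shows "T (e j) *\<^sub>v S c0 c1 cm cn cq = S c0 c1 cm cn cq + (S c0 c1 cm cn cq $ p) \<cdot>\<^sub>v e j"
  using assms by (simp add: transvection_unit_vec_mult_vec word_state_carrier)

private lemma word_state_transvection_pair:
  assumes "j < 2*n" "k < 2*n" "2*n-1-j = p" "2*n-1-k = q"
  shows "T (e j + e k) *\<^sub>v S c0 c1 cm cn cq
       = S c0 c1 cm cn cq + (S c0 c1 cm cn cq $ p + S c0 c1 cm cn cq $ q) \<cdot>\<^sub>v (e j + e k)"
  using assms by (simp add: transvection_unit_vec_pair_mult_vec word_state_carrier)

private lemma word_state_nth:
  "S c0 c1 cm cn cq $ 0 = x$0 + c0" "S c0 c1 cm cn cq $ (n - 1) = x$(n-1) + cm"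
  "S c0 c1 cm cn cq $ n = x$n + cn" "S c0 c1 cm cn cq $ (2*n - 1) = x$(2*n-1) + cq"
  "S c0 c1 cm cn cq $ (2*n - 2) = x$(2*n-2)"
  using n by (auto simp: word_state_def)

private lemma word_state_add:
  "S c0 c1 cm cn cq + a \<cdot>\<^sub>v e 0 = S (c0 + a) c1 cm cn cq"
  "S c0 c1 cm cn cq + a \<cdot>\<^sub>v e 1 = S c0 (c1 + a) cm cn cq"
  "S c0 c1 cm cn cq + a \<cdot>\<^sub>v e (n-1) = S c0 c1 (cm + a) cn cq"
  "S c0 c1 cm cn cq + a \<cdot>\<^sub>v e n = S c0 c1 cm (cn + a) cq"
  "S c0 c1 cm cn cq + a \<cdot>\<^sub>v e (2*n-1) = S c0 c1 cm cn (cq + a)"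
  by (rule eq_vecI, use n in \<open>auto simp: word_state_def add.assoc\<close>)+

private lemma word_state_add_pair:
  "j < 2*n \<Longrightarrow> k < 2*n \<Longrightarrow>
   S c0 c1 cm cn cq + a \<cdot>\<^sub>v (e j + e k) = S c0 c1 cm cn cq + a \<cdot>\<^sub>v e j + a \<cdot>\<^sub>v e k"
  by (intro eq_vecI) (auto simp: word_state_def distrib_left add.assoc)

private lemma word_state_transvections:
  "T (e n) *\<^sub>v S c0 c1 cm cn cq = S c0 c1 cm (cn + (x$(n-1) + cm)) cq"
  "T (e n + e 0) *\<^sub>v S c0 c1 cm cn cq
     = S (c0 + ((x$(n-1) + cm) + (x$(2*n-1) + cq))) c1 cm (cn + ((x$(n-1) + cm) + (x$(2*n-1) + cq))) cq"
  "T (e 0) *\<^sub>v S c0 c1 cm cn cq = S (c0 + (x$(2*n-1) + cq)) c1 cm cn cq"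
  "T (e 0 + e 1) *\<^sub>v S c0 c1 cm cn cq
     = S (c0 + ((x$(2*n-1) + cq) + x$(2*n-2))) (c1 + ((x$(2*n-1) + cq) + x$(2*n-2))) cm cn cq"
  "T (e (n-1)) *\<^sub>v S c0 c1 cm cn cq = S c0 c1 (cm + (x$n + cn)) cn cq"
  "T (e (n-1) + e (2*n-1)) *\<^sub>v S c0 c1 cm cn cq
     = S c0 c1 (cm + ((x$n + cn) + (x$0 + c0))) cn (cq + ((x$n + cn) + (x$0 + c0)))"
proof -
  have idx: "n < 2*n" "0 < 2*n" "1 < 2*n" "n-1 < 2*n" "2*n-1 < 2*n"
    "2*n-1-n = n-1" "2*n-1-0 = 2*n-1" "2*n-1-1 = 2*n-2" "2*n-1-(n-1) = n" "2*n-1-(2*n-1) = 0"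
    using n by auto
  \<comment> \<open>\<open>[simplified]\<close> puts \<open>n - 1\<close> into the simplifier's normal form \<open>n - Suc 0\<close>.\<close>
  note state = word_state_nth[simplified] word_state_add[simplified]
  show "T (e n) *\<^sub>v S c0 c1 cm cn cq = S c0 c1 cm (cn + (x$(n-1) + cm)) cq"
    by (simp add: word_state_transvection_unit[OF idx(1,6), simplified] state)
  show "T (e n + e 0) *\<^sub>v S c0 c1 cm cn cq
     = S (c0 + ((x$(n-1) + cm) + (x$(2*n-1) + cq))) c1 cm (cn + ((x$(n-1) + cm) + (x$(2*n-1) + cq))) cq"
    by (simp add: word_state_transvection_pair[OF idx(1,2,6,7), simplified] state
        word_state_add_pair[OF idx(1,2), simplified])
  show "T (e 0) *\<^sub>v S c0 c1 cm cn cq = S (c0 + (x$(2*n-1) + cq)) c1 cm cn cq"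
    by (simp add: word_state_transvection_unit[OF idx(2,7), simplified] state)
  show "T (e 0 + e 1) *\<^sub>v S c0 c1 cm cn cq
     = S (c0 + ((x$(2*n-1) + cq) + x$(2*n-2))) (c1 + ((x$(2*n-1) + cq) + x$(2*n-2))) cm cn cq"
    by (simp add: word_state_transvection_pair[OF idx(2,3,7,8), simplified] state
        word_state_add_pair[OF idx(2,3), simplified])
  show "T (e (n-1)) *\<^sub>v S c0 c1 cm cn cq = S c0 c1 (cm + (x$n + cn)) cn cq"
    by (simp add: word_state_transvection_unit[OF idx(4,9), simplified] state)
  show "T (e (n-1) + e (2*n-1)) *\<^sub>v S c0 c1 cm cn cq
     = S c0 c1 (cm + ((x$n + cn) + (x$0 + c0))) cn (cq + ((x$n + cn) + (x$0 + c0)))"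
    by (simp add: word_state_transvection_pair[OF idx(4,5,9,10), simplified] state
        word_state_add_pair[OF idx(4,5), simplified])
qed

private abbreviation (input) W :: "bit mat" where
  "W \<equiv> (T (e n) * T (e n + e 0)) * (T (e 0) * T (e 0 + e 1)) * (T (e (n-1)) * T (e (n-1) + e (2*n-1)))"

private lemma W_carrier: "W \<in> carrier_mat (2*n) (2*n)"
  by (intro mult_carrier_mat_square transvection_carrier)

private lemma W_mult_word_state:
  "W *\<^sub>v S c0 c1 cm cn cq = T (e n) *\<^sub>v (T (e n + e 0) *\<^sub>v (T (e 0) *\<^sub>v (T (e 0 + e 1) *\<^sub>v
     (T (e (n-1)) *\<^sub>v (T (e (n-1) + e (2*n-1)) *\<^sub>v S c0 c1 cm cn cq)))))"
  by (simp add: assoc_mult_mat_vec_square[of _ "2*n"] word_state_carrier)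

lemma word_fifth_power_mult_vec: "(W * W * W * W * W) *\<^sub>v x = T (e 1) *\<^sub>v x"
proof -
  have x0: "S 0 0 0 0 0 = x" using x by (intro eq_vecI) (auto simp: word_state_def)
  have "(W * W * W * W * W) *\<^sub>v x = W *\<^sub>v (W *\<^sub>v (W *\<^sub>v (W *\<^sub>v (W *\<^sub>v S 0 0 0 0 0))))"
    unfolding x0 using W_carrier x by (simp add: assoc_mult_mat_vec_square[of _ "2*n"])
  also have "\<dots> = S 0 (x$(2*n-2)) 0 0 0"
    by (cases "x$0"; cases "x$(n-1)"; cases "x$n"; cases "x$(2*n-1)"; cases "x$(2*n-2)")
      (simp_all add: W_mult_word_state[simplified] word_state_transvections[simplified])
  also have "\<dots> = S 0 0 0 0 0 + (S 0 0 0 0 0 $ (2*n-2)) \<cdot>\<^sub>v e 1"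
    by (simp add: word_state_nth word_state_add[simplified])
  also have "\<dots> = T (e 1) *\<^sub>v S 0 0 0 0 0"
    by (rule word_state_transvection_unit[symmetric]) (use n in auto)
  finally show ?thesis unfolding x0 .
qed

end

lemma word_fifth_power:
  assumes n: "n > 2"
  defines "W \<equiv> (transvection (2*n) (unit_vec (2*n) n) * transvection (2*n) (unit_vec (2*n) n + unit_vec (2*n) 0))
              * (transvection (2*n) (unit_vec (2*n) 0) * transvection (2*n) (unit_vec (2*n) 0 + unit_vec (2*n) 1))
              * (transvection (2*n) (unit_vec (2*n) (n-1))
                  * transvection (2*n) (unit_vec (2*n) (n-1) + unit_vec (2*n) (2*n-1)))"
  shows "W * W * W * W * W = transvection (2*n) (unit_vec (2*n) 1)"
proof (rule eq_mat_by_mult_vec[where d="2*n"])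
  fix x :: "bit vec" assume "x \<in> carrier_vec (2*n)"
  then show "(W * W * W * W * W) *\<^sub>v x = transvection (2*n) (unit_vec (2*n) 1) *\<^sub>v x"
    unfolding W_def by (rule word_fifth_power_mult_vec[OF n])
qed (simp_all add: W_def)

section \<open>Sets of centres closed under transvections\<close>

definition transvection_closed :: "nat \<Rightarrow> bit vec set \<Rightarrow> bool" where
  "transvection_closed d V \<longleftrightarrow> (\<forall>v\<in>V. \<forall>w\<in>V. transvection d v *\<^sub>v w \<in> V)"

lemma transvection_closedD:
  "transvection_closed d V \<Longrightarrow> v \<in> V \<Longrightarrow> w \<in> V \<Longrightarrow> transvection d v *\<^sub>v w \<in> V"
  unfolding transvection_closed_def by blast

lemma partner_neq: "(i::nat) < 2*n \<Longrightarrow> i \<noteq> 2*n - 1 - i"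
  by presburger

lemma transvection_closed_exchange:
  assumes closed: "transvection_closed (2*n) V"
    and units: "\<And>i. i < 2*n \<Longrightarrow> unit_vec (2*n) i \<in> V"
    and lt: "P < 2*n" "Q < 2*n" "R < 2*n"
    and neq: "P \<noteq> Q" "P \<noteq> R" "Q \<noteq> R" "P \<noteq> 2*n-1-Q" "P \<noteq> 2*n-1-R" "Q \<noteq> 2*n-1-R"
    and PQ: "unit_vec (2*n) P + unit_vec (2*n) Q \<in> V"
    and QR': "unit_vec (2*n) (2*n-1-Q) + unit_vec (2*n) (2*n-1-R) \<in> V"
  shows "unit_vec (2*n) P + unit_vec (2*n) R \<in> V"
proof -
  let ?e = "unit_vec (2*n)" and ?T = "transvection (2*n)"
  define P' Q' R' where "P' = 2*n-1-P" and "Q' = 2*n-1-Q" and "R' = 2*n-1-R"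
  have lt': "P' < 2*n" "Q' < 2*n" "R' < 2*n" using lt unfolding P'_def Q'_def R'_def by auto
  have partners: "2*n-1-P = P'" "2*n-1-Q = Q'" "2*n-1-R = R'" "2*n-1-Q' = Q" "2*n-1-R' = R"
    using lt unfolding P'_def Q'_def R'_def by auto
  have distinct: "P' \<noteq> Q'" "P' \<noteq> R'" "Q' \<noteq> R'"
    using lt neq(1-3) unfolding P'_def Q'_def R'_def by arith+
  have crossed: "P' \<noteq> Q" "P \<noteq> R'" "Q \<noteq> R'" "R \<noteq> Q'"
    using lt neq(4-6) unfolding P'_def Q'_def R'_def by arith+
  have "Q \<noteq> Q'" "R \<noteq> R'"
    using lt partner_neq unfolding Q'_def R'_def by blast+
  note facts = lt lt' distinct distinct[symmetric] crossed crossed[symmetric] this this[symmetric]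
    neq(1-3) neq(1-3)[symmetric] partners[simplified]
  define v1 where "v1 = ?T (?e Q) *\<^sub>v (?e Q' + ?e R')"
  define v2 where "v2 = ?T (?e P + ?e Q) *\<^sub>v v1"
  define v3 where "v3 = ?T (?e R) *\<^sub>v v2"
  have e1: "v1 = ?e Q' + ?e R' + ?e Q"
    unfolding v1_def using facts by (simp add: transvection_unit_vec_mult_vec)
  have e2: "v2 = v1 + (?e P + ?e Q)"
    unfolding v2_def e1 using facts by (simp add: transvection_unit_vec_pair_mult_vec)
  have e3: "v3 = v2 + ?e R"
    unfolding v3_def e2 e1 using facts by (simp add: transvection_unit_vec_mult_vec)
  have e4: "?T (?e Q' + ?e R') *\<^sub>v v3 = ?e P + ?e R"
    unfolding e3 e2 e1 using facts
    by (simp add: transvection_unit_vec_pair_mult_vec) (intro eq_vecI, auto)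
  have "v1 \<in> V"
    unfolding v1_def using QR' by (intro transvection_closedD[OF closed] units lt) (simp add: Q'_def R'_def)
  then have "v2 \<in> V" unfolding v2_def by (intro transvection_closedD[OF closed PQ])
  then have "v3 \<in> V" unfolding v3_def by (intro transvection_closedD[OF closed] units lt)
  then have "?T (?e Q' + ?e R') *\<^sub>v v3 \<in> V"
    using QR' by (intro transvection_closedD[OF closed]) (simp_all add: Q'_def R'_def)
  then show ?thesis unfolding e4 .
qed

definition support :: "bit vec \<Rightarrow> nat set" where
  "support v = {i. i < dim_vec v \<and> v$i = 1}"

lemma finite_support: "finite (support v)"
  unfolding support_def by auto

lemma support_add_unit_vec:
  assumes "v \<in> carrier_vec d" "i < d"
  shows "support (v + unit_vec d i) = (if v$i = 1 then support v - {i} else insert i (support v))"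
  using assms by (cases "v$i") (auto simp: support_def split: if_splits)

lemma support_empty_iff: "v \<in> carrier_vec d \<Longrightarrow> support v = {} \<longleftrightarrow> v = 0\<^sub>v d"
  by (auto simp: support_def)

lemma support_eq_singleton:
  assumes v: "v \<in> carrier_vec d" and i: "support v = {i}"
  shows "v = unit_vec d i"
proof (rule eq_vecI)
  fix k assume "k < dim_vec (unit_vec d i)"
  then have k: "k < d" by simp
  have "i < d" "v $ i = 1" using v i by (auto simp: support_def)
  moreover have "v $ k = 0" if "k \<noteq> i"
  proof -
    from i that have "k \<notin> support v" by simp
    with k v show ?thesis by (simp add: support_def)
  qed
  ultimately show "v $ k = unit_vec d i $ k" using k by auto
qed (use v in simp)

text \<open>A centre containing a pair of partner coordinates \<open>i, i'\<close> is obtained from one with smaller support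
  by the transvection with centre \<open>e\<^sub>i\<close>.\<close>

lemma transvection_closed_partners_in_support:
  assumes closed: "transvection_closed (2*n) V"
    and units: "\<And>i. i < 2*n \<Longrightarrow> unit_vec (2*n) i \<in> V"
    and v: "v \<in> carrier_vec (2*n)" and i: "i < 2*n" "v$i = 1" "v$(2*n-1-i) = 1"
    and smaller: "\<And>w. card (support w) < card (support v) \<Longrightarrow> w \<in> carrier_vec (2*n) \<Longrightarrow> w \<in> V"
  shows "v \<in> V"
proof -
  let ?e = "unit_vec (2*n) i"
  have "support (v + ?e) = support v - {i}"
    using v i by (simp add: support_add_unit_vec)
  moreover have "i \<in> support v" using v i by (simp add: support_def)
  ultimately have "card (support (v + ?e)) < card (support v)"
    by (metis card_Diff1_less finite_support)
  then have "v + ?e \<in> V" using v by (intro smaller) simp_all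
  then have "transvection (2*n) ?e *\<^sub>v (v + ?e) \<in> V"
    by (intro transvection_closedD[OF closed units[OF i(1)]])
  moreover have "transvection (2*n) ?e *\<^sub>v (v + ?e) = v"
    using v i partner_neq[of i n] by (intro eq_vecI) (auto simp: transvection_unit_vec_mult_vec)
  ultimately show ?thesis by simp
qed

text \<open>If \<open>i, j\<close> lie in the support but their partners do not, conjugating by the centres \<open>e\<^sub>i' + e\<^sub>j\<close> and
  \<open>e\<^sub>i\<close> trades \<open>i, j\<close> for \<open>i'\<close>.\<close>

lemma transvection_closed_no_partners_in_support:
  assumes closed: "transvection_closed (2*n) V"
    and units: "\<And>i. i < 2*n \<Longrightarrow> unit_vec (2*n) i \<in> V"
    and pairs: "\<And>a b. a < 2*n \<Longrightarrow> b < 2*n \<Longrightarrow> a \<noteq> b \<Longrightarrow> b \<noteq> 2*n-1-a \<Longrightarrow>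
      unit_vec (2*n) a + unit_vec (2*n) b \<in> V"
    and v: "v \<in> carrier_vec (2*n)" and ij: "i < 2*n" "j < 2*n" "i \<noteq> j"
    and vij: "v$i = 1" "v$j = 1" "v$(2*n-1-i) = 0" "v$(2*n-1-j) = 0"
    and smaller: "\<And>w. card (support w) < card (support v) \<Longrightarrow> w \<in> carrier_vec (2*n) \<Longrightarrow> w \<in> V"
  shows "v \<in> V"
proof -
  let ?e = "unit_vec (2*n)" and ?T = "transvection (2*n)"
  define i' where "i' = 2*n-1-i"
  have i': "i' < 2*n" "2*n-1-i' = i" "i' \<noteq> i" "i' \<noteq> j"
    using ij vij partner_neq[of i n] unfolding i'_def by auto
  define y :: "bit vec" where "y = ?e i' + ?e j"
  have y: "y \<in> carrier_vec (2*n)" unfolding y_def by simp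
  have yV: "y \<in> V" unfolding y_def using ij i' by (intro pairs) auto
  define w :: "bit vec" where "w = v + ?e i' + ?e j + ?e i"
  have w: "w \<in> carrier_vec (2*n)" unfolding w_def using v by simp
  have Tyv: "?T y *\<^sub>v v = v + ?e i' + ?e j"
    unfolding y_def using v ij i' vij by (intro eq_vecI) (auto simp: transvection_unit_vec_pair_mult_vec)
  have "w = ?T (?e i) *\<^sub>v (?T y *\<^sub>v v)"
    unfolding Tyv w_def using v ij i' vij by (intro eq_vecI) (auto simp: transvection_unit_vec_mult_vec)
  then have "?T (?e i) *\<^sub>v w = ?T y *\<^sub>v v"
    using v y by (simp add: transvection_mult_vec_involution)
  then have v_eq: "v = ?T y *\<^sub>v (?T (?e i) *\<^sub>v w)"
    using v y by (simp add: transvection_mult_vec_involution)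
  have "support (v + ?e i') = insert i' (support v)"
    using v i' vij unfolding i'_def by (subst support_add_unit_vec) auto
  then have "support (v + ?e i' + ?e j) = insert i' (support v) - {j}"
    using v ij i' vij by (subst support_add_unit_vec) auto
  then have "support w = insert i' (support v) - {j} - {i}"
    unfolding w_def using v ij i' vij by (subst support_add_unit_vec) auto
  moreover have "i \<in> support v" "j \<in> support v" "i' \<notin> support v"
    using v ij vij unfolding i'_def by (auto simp: support_def)
  ultimately have "card (support w) = card (support v) - 1" and "card (support v) > 0"
    using ij(3) finite_support[of v] by (simp_all add: card_insert_if card_gt_0_iff) auto
  then have "card (support w) < card (support v)" by simp
  then have "w \<in> V" by (rule smaller[OF _ w])
  then show "v \<in> V" unfolding v_eq
    by (intro transvection_closedD[OF closed yV] transvection_closedD[OF closed units[OF ij(1)]])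
qed

lemma transvection_closed_carrier:
  assumes closed: "transvection_closed (2*n) V" and zero: "0\<^sub>v (2*n) \<in> V"
    and units: "\<And>i. i < 2*n \<Longrightarrow> unit_vec (2*n) i \<in> V"
    and pairs: "\<And>a b. a < 2*n \<Longrightarrow> b < 2*n \<Longrightarrow> a \<noteq> b \<Longrightarrow> b \<noteq> 2*n-1-a \<Longrightarrow>
      unit_vec (2*n) a + unit_vec (2*n) b \<in> V"
  shows "v \<in> carrier_vec (2*n) \<Longrightarrow> v \<in> V"
proof (induction "card (support v)" arbitrary: v rule: less_induct)
  case less
  note v = less.prems and smaller = less.hyps
  show ?case
  proof (cases "support v = {}")
    case True
    with v zero show ?thesis by (simp add: support_empty_iff)
  next
    case False
    then obtain i where i: "i < 2*n" "v$i = 1" using v by (auto simp: support_def)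
    show ?thesis
    proof (cases "v$(2*n-1-i) = 1")
      case True
      with i show ?thesis by (intro transvection_closed_partners_in_support[OF closed units v _ _ _ smaller])
    next
      case i': False
      show ?thesis
      proof (cases "support v = {i}")
        case True
        with v have "v = unit_vec (2*n) i" by (rule support_eq_singleton)
        with units[OF i(1)] show ?thesis by simp
      next
        case False
        then obtain j where j: "j < 2*n" "v$j = 1" "j \<noteq> i"
          using v i by (auto simp: support_def)
        show ?thesis
        proof (cases "v$(2*n-1-j) = 1")
          case True
          with j show ?thesis by (intro transvection_closed_partners_in_support[OF closed units v _ _ _ smaller])
        next
          case False
          with i i' j show ?thesis
            by (intro transvection_closed_no_partners_in_support[OF closed units pairs v i(1) j(1)
                  j(3)[symmetric] i(2) j(2) _ _ smaller]) simp_all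
        qed
      qed
    qed
  qed
qed

section \<open>Every symplectic matrix is a product of transvections\<close>

lemma transvection_pair_moves:
  assumes "u \<in> carrier_vec (2*n)" "z \<in> carrier_vec (2*n)" "v \<in> carrier_vec (2*n)"
    and "symp_form (2*n) u z = 1" "symp_form (2*n) z v = 1"
  shows "transvection (2*n) (z + v) *\<^sub>v (transvection (2*n) (u + z) *\<^sub>v u) = v"
  using assms by (simp add: transvection_moves)

text \<open>\<open>fixes_outer n k X\<close>: \<open>X\<close> fixes \<open>e\<^sub>i\<close> and \<open>e\<^bsub>2n-1-i\<^esub>\<close> for all \<open>i < k\<close>;
  \<open>inner_vec n k w\<close>: \<open>w\<close> vanishes at these coordinates, so that the transvection with centre \<open>w\<close>
  preserves \<open>fixes_outer n k\<close>.\<close>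

definition fixes_outer :: "nat \<Rightarrow> nat \<Rightarrow> bit mat \<Rightarrow> bool" where
  "fixes_outer n k X \<longleftrightarrow> (\<forall>i<k. X *\<^sub>v unit_vec (2*n) i = unit_vec (2*n) i
       \<and> X *\<^sub>v unit_vec (2*n) (2*n-1-i) = unit_vec (2*n) (2*n-1-i))"

definition inner_vec :: "nat \<Rightarrow> nat \<Rightarrow> bit vec \<Rightarrow> bool" where
  "inner_vec n k w \<longleftrightarrow> w \<in> carrier_vec (2*n) \<and> (\<forall>i<k. w$i = 0 \<and> w$(2*n-1-i) = 0)"

lemma fixes_outer_Suc:
  "fixes_outer n (Suc k) X \<longleftrightarrow> fixes_outer n k X \<and> X *\<^sub>v unit_vec (2*n) k = unit_vec (2*n) k
     \<and> X *\<^sub>v unit_vec (2*n) (2*n-1-k) = unit_vec (2*n) (2*n-1-k)"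
  unfolding fixes_outer_def using less_Suc_eq by auto

lemma fixes_outer_all:
  assumes X: "X \<in> carrier_mat (2*n) (2*n)" and f: "fixes_outer n n X"
  shows "X = 1\<^sub>m (2*n)"
proof (rule eq_mat_by_mult_unit_vec[OF X one_carrier_mat])
  fix j assume j: "j < 2*n"
  show "X *\<^sub>v unit_vec (2*n) j = 1\<^sub>m (2*n) *\<^sub>v unit_vec (2*n) j"
  proof (cases "j < n")
    case True
    with f show ?thesis unfolding fixes_outer_def by simp
  next
    case False
    with j have "2*n-1-j < n" "2*n-1-(2*n-1-j) = j" by auto
    with f show ?thesis unfolding fixes_outer_def by (metis one_mult_mat_vec unit_vec_carrier)
  qed
qed

lemma inner_vec_zero: "k \<le> n \<Longrightarrow> inner_vec n k (0\<^sub>v (2*n))"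
  unfolding inner_vec_def by auto

lemma inner_vec_add: "k \<le> n \<Longrightarrow> inner_vec n k a \<Longrightarrow> inner_vec n k b \<Longrightarrow> inner_vec n k (a + b)"
  unfolding inner_vec_def by auto

lemma inner_vec_unit_vec: "k \<le> j \<Longrightarrow> j \<le> 2*n-1-k \<Longrightarrow> j < 2*n \<Longrightarrow> inner_vec n k (unit_vec (2*n) j)"
  unfolding inner_vec_def by auto

lemma fixes_outer_transvection:
  assumes k: "k \<le> n" and X: "X \<in> carrier_mat (2*n) (2*n)" and f: "fixes_outer n k X" and w: "inner_vec n k w"
  shows "fixes_outer n k (transvection (2*n) w * X)"
  unfolding fixes_outer_def
proof (intro allI impI conjI)
  fix i assume i: "i < k"
  have wc: "w \<in> carrier_vec (2*n)" using w unfolding inner_vec_def by auto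
  have il: "i < 2*n" "2*n-1-i < 2*n" "2*n-1-(2*n-1-i) = i" using i k by auto
  show "(transvection (2*n) w * X) *\<^sub>v unit_vec (2*n) i = unit_vec (2*n) i"
    using X wc f i w il
    by (simp add: assoc_mult_mat_vec_square[of _ "2*n"] fixes_outer_def transvection_fixes
        symp_form_unit_vec_left inner_vec_def)
  show "(transvection (2*n) w * X) *\<^sub>v unit_vec (2*n) (2*n-1-i) = unit_vec (2*n) (2*n-1-i)"
    using X wc f i w il
    by (simp add: assoc_mult_mat_vec_square[of _ "2*n"] fixes_outer_def transvection_fixes
        symp_form_unit_vec_left inner_vec_def)
qed

lemma symplectic_image_inner_vec:
  assumes k: "k < n" and S: "symplectic (2*n) X" and f: "fixes_outer n k X"
    and j: "j = k \<or> j = 2*n-1-k"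
  shows "inner_vec n k (X *\<^sub>v unit_vec (2*n) j)"
  unfolding inner_vec_def
proof (intro conjI allI impI)
  let ?e = "unit_vec (2*n)" and ?B = "symp_form (2*n)"
  have X: "X \<in> carrier_mat (2*n) (2*n)" by (rule symplectic_carrier[OF S])
  have jl: "j < 2*n" using j k by auto
  show c: "X *\<^sub>v ?e j \<in> carrier_vec (2*n)" using X by simp
  fix i assume i: "i < k"
  have il: "i < 2*n" "2*n-1-i < 2*n" "2*n-1-(2*n-1-i) = i" using i k by auto
  have fixed: "X *\<^sub>v ?e i = ?e i" "X *\<^sub>v ?e (2*n-1-i) = ?e (2*n-1-i)"
    using f i unfolding fixes_outer_def by auto
  have "(X *\<^sub>v ?e j) $ i = ?B (X *\<^sub>v ?e j) (X *\<^sub>v ?e (2*n-1-i))"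
    unfolding fixed symp_form_unit_vec_right[OF il(2)] il(3) ..
  also have "\<dots> = ?B (?e j) (?e (2*n-1-i))" using S jl il by (simp add: symplectic_symp_form)
  also have "\<dots> = 0" using j i k il by (auto simp: symp_form_unit_vec_right)
  finally show "(X *\<^sub>v ?e j) $ i = 0" .
  have "(X *\<^sub>v ?e j) $ (2*n-1-i) = ?B (X *\<^sub>v ?e j) (X *\<^sub>v ?e i)"
    unfolding fixed symp_form_unit_vec_right[OF il(1)] ..
  also have "\<dots> = ?B (?e j) (?e i)" using S jl il by (simp add: symplectic_symp_form)
  also have "\<dots> = 0" using j i k il by (auto simp: symp_form_unit_vec_right)
  finally show "(X *\<^sub>v ?e j) $ (2*n-1-i) = 0" .
qed

text \<open>A nonzero inner vector is carried to \<open>e\<^sub>k\<close> by at most two transvections with inner centres: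
  directly if it pairs nontrivially with \<open>e\<^sub>k\<close>, and otherwise through an inner vector \<open>z\<close> pairing
  nontrivially with both.\<close>

lemma inner_vec_move_to_unit_vec:
  assumes k: "k < n" and u: "inner_vec n k u" and u0: "u \<noteq> 0\<^sub>v (2*n)"
  shows "\<exists>w1 w2. inner_vec n k w1 \<and> inner_vec n k w2
           \<and> transvection (2*n) w2 *\<^sub>v (transvection (2*n) w1 *\<^sub>v u) = unit_vec (2*n) k"
proof -
  let ?e = "unit_vec (2*n)" and ?B = "symp_form (2*n)" and ?T = "transvection (2*n)"
  define p where "p = 2*n-1-k"
  have kp: "k < 2*n" "p < 2*n" "2*n-1-p = k" "2*n-1-k = p" "k \<noteq> p" "k \<le> p"
    using k unfolding p_def by auto
  have uc: "u \<in> carrier_vec (2*n)" using u unfolding inner_vec_def by simp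
  have ek: "inner_vec n k (?e k)" and ep: "inner_vec n k (?e p)"
    using kp by (auto intro: inner_vec_unit_vec)
  show ?thesis
  proof (cases "u$p = 1")
    case True
    have "?T (u + ?e k) *\<^sub>v u = ?e k"
      using uc kp True by (intro transvection_moves) (simp_all add: symp_form_unit_vec_right)
    moreover have "?T (0\<^sub>v (2*n)) *\<^sub>v ?e k = ?e k" by (simp add: transvection_zero)
    moreover have "inner_vec n k (u + ?e k)" "inner_vec n k (0\<^sub>v (2*n))"
      using k u ek by (auto intro: inner_vec_add inner_vec_zero)
    ultimately show ?thesis by metis
  next
    case False
    have "\<exists>z. inner_vec n k z \<and> ?B u z = 1 \<and> ?B z (?e k) = 1"
    proof (cases "u$k = 1")
      case True
      then show ?thesis
        using ep kp by (intro exI[of _ "?e p"]) (simp add: symp_form_unit_vec_left symp_form_unit_vec_right)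
    next
      case uk: False
      have "\<exists>j<2*n. u$j \<noteq> 0"
      proof (rule ccontr)
        assume "\<not> (\<exists>j<2*n. u$j \<noteq> 0)"
        then have "u = 0\<^sub>v (2*n)" using uc by (intro eq_vecI) auto
        with u0 show False ..
      qed
      then obtain j where j: "j < 2*n" "u$j = 1" by auto
      have jk: "j \<noteq> k" "j \<noteq> p" using j uk False by auto
      have "k \<le> j"
      proof (rule ccontr)
        assume "\<not> k \<le> j"
        with u have "u$j = 0" unfolding inner_vec_def by auto
        with j show False by simp
      qed
      moreover have "j \<le> p"
      proof (rule ccontr)
        assume "\<not> j \<le> p"
        then have "2*n-1-j < k" "2*n-1-(2*n-1-j) = j" using j kp by auto
        with u have "u$j = 0" unfolding inner_vec_def by metis
        with j show False by simp
      qed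
      ultimately have j': "2*n-1-j < 2*n" "2*n-1-(2*n-1-j) = j" "k \<le> 2*n-1-j" "2*n-1-j \<le> p"
        "2*n-1-j \<noteq> p" using j jk kp by auto
      show ?thesis
      proof (intro exI conjI)
        show "inner_vec n k (?e p + ?e (2*n-1-j))"
          using k kp j' by (intro inner_vec_add inner_vec_unit_vec) auto
        show "?B u (?e p + ?e (2*n-1-j)) = 1"
          using uc kp j' j uk by (simp add: symp_form_add_right symp_form_unit_vec_right)
        show "?B (?e p + ?e (2*n-1-j)) (?e k) = 1"
          using kp j' jk by (simp add: symp_form_add_left symp_form_unit_vec_left)
      qed
    qed
    then obtain z where z: "inner_vec n k z" "?B u z = 1" "?B z (?e k) = 1" by blast
    have "?T (z + ?e k) *\<^sub>v (?T (u + z) *\<^sub>v u) = ?e k"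
      using uc z kp by (intro transvection_pair_moves) (auto simp: inner_vec_def)
    moreover have "inner_vec n k (u + z)" "inner_vec n k (z + ?e k)"
      using k u z ek by (auto intro: inner_vec_add)
    ultimately show ?thesis by blast
  qed
qed

text \<open>Similarly a vector pairing nontrivially with \<open>e\<^sub>k\<close> is carried to \<open>e\<^bsub>2n-1-k\<^esub>\<close> by transvections
  fixing \<open>e\<^sub>k\<close>, i.e.\ with centres vanishing at \<open>2n-1-k\<close>.\<close>

lemma inner_vec_move_to_partner_unit_vec:
  assumes k: "k < n" and v: "inner_vec n k v" and vp: "v$(2*n-1-k) = 1"
  shows "\<exists>w1 w2. inner_vec n k w1 \<and> inner_vec n k w2 \<and> w1$(2*n-1-k) = 0 \<and> w2$(2*n-1-k) = 0
           \<and> transvection (2*n) w2 *\<^sub>v (transvection (2*n) w1 *\<^sub>v v) = unit_vec (2*n) (2*n-1-k)"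
proof -
  let ?e = "unit_vec (2*n)" and ?T = "transvection (2*n)"
  define p where "p = 2*n-1-k"
  have kp: "k < 2*n" "p < 2*n" "2*n-1-p = k" "2*n-1-k = p" "k \<noteq> p" "k \<le> p"
    using k unfolding p_def by auto
  have ep: "inner_vec n k (?e p)" and ek: "inner_vec n k (?e k)"
    using kp by (auto intro: inner_vec_unit_vec)
  have to_p: "?T (y + ?e p) *\<^sub>v y = ?e p" "inner_vec n k (y + ?e p)" "(y + ?e p) $ p = 0"
    if y: "inner_vec n k y" "y$p = 1" "y$k = 1" for y
  proof -
    have yc: "y \<in> carrier_vec (2*n)" using y unfolding inner_vec_def by simp
    show "?T (y + ?e p) *\<^sub>v y = ?e p"
      using yc y kp by (intro transvection_moves) (simp_all add: symp_form_unit_vec_right)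
    show "inner_vec n k (y + ?e p)" using k y ep by (auto intro: inner_vec_add)
    show "(y + ?e p) $ p = 0" using yc y kp by simp
  qed
  have vc: "v \<in> carrier_vec (2*n)" using v unfolding inner_vec_def by simp
  have vp': "v$p = 1" using vp unfolding p_def .
  show ?thesis
  proof (cases "v$k = 1")
    case True
    have "?T (0\<^sub>v (2*n)) *\<^sub>v ?e p = ?e p" by (simp add: transvection_zero)
    moreover have "inner_vec n k (0\<^sub>v (2*n))" using k by (auto intro: inner_vec_zero)
    ultimately show ?thesis unfolding kp(4) using to_p[OF v vp' True] kp(2)
      by (intro exI[of _ "v + ?e p"] exI[of _ "0\<^sub>v (2*n)"]) auto
  next
    case False
    define v' where "v' = ?T (?e k) *\<^sub>v v"
    have v'_eq: "v' = v + ?e k"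
      unfolding v'_def using vc kp vp' by (simp add: transvection_unit_vec_mult_vec)
    have v': "inner_vec n k v'" "v'$p = 1" "v'$k = 1"
      using k v ek vc kp vp' False unfolding v'_eq by (auto intro: inner_vec_add)
    show ?thesis
      unfolding kp(4) using to_p[OF v'] ek kp unfolding v'_def by fastforce
  qed
qed

lemma symplectic_fixes_outer_step:
  assumes k: "k < n" and S: "symplectic (2*n) X" and f: "fixes_outer n k X"
  shows "\<exists>w1 w2 w3 w4. inner_vec n k w1 \<and> inner_vec n k w2 \<and> inner_vec n k w3 \<and> inner_vec n k w4 \<and>
    fixes_outer n (Suc k) (transvection (2*n) w4 * (transvection (2*n) w3 *
      (transvection (2*n) w2 * (transvection (2*n) w1 * X))))"
proof -
  let ?e = "unit_vec (2*n)" and ?B = "symp_form (2*n)" and ?T = "transvection (2*n)"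
  define p where "p = 2*n-1-k"
  have kp: "k < 2*n" "p < 2*n" "2*n-1-p = k" "2*n-1-k = p" "k \<le> n"
    using k unfolding p_def by auto
  have Xc: "X \<in> carrier_mat (2*n) (2*n)" by (rule symplectic_carrier[OF S])
  have inner_c: "w \<in> carrier_vec (2*n)" if "inner_vec n k w" for w
    using that unfolding inner_vec_def by simp
  have keep: "symplectic (2*n) (?T w * Y) \<and> fixes_outer n k (?T w * Y)"
    if "inner_vec n k w" "symplectic (2*n) Y" "fixes_outer n k Y" for w Y
    using that inner_c[OF that(1)] kp(5)
    by (simp add: symplectic_mult symplectic_transvection fixes_outer_transvection symplectic_carrier)
  define u where "u = X *\<^sub>v ?e k"
  have "?B u (X *\<^sub>v ?e p) = 1"
    unfolding u_def using S kp by (simp add: symplectic_symp_form symp_form_unit_vec_right)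
  then have u0: "u \<noteq> 0\<^sub>v (2*n)" by (auto simp: symp_form_zero_left)
  have u: "inner_vec n k u" unfolding u_def by (rule symplectic_image_inner_vec[OF k S f]) simp
  obtain w1 w2 where w12: "inner_vec n k w1" "inner_vec n k w2" "?T w2 *\<^sub>v (?T w1 *\<^sub>v u) = ?e k"
    using inner_vec_move_to_unit_vec[OF k u u0] by blast
  define Y where "Y = ?T w2 * (?T w1 * X)"
  have Y: "symplectic (2*n) Y" "fixes_outer n k Y"
    unfolding Y_def using keep w12 S f by blast+
  have Yk: "Y *\<^sub>v ?e k = ?e k"
    unfolding Y_def using w12 Xc inner_c[of w1] inner_c[of w2]
    by (simp add: assoc_mult_mat_vec_square[of _ "2*n"] u_def)
  define v where "v = Y *\<^sub>v ?e p"
  have v: "inner_vec n k v"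
    unfolding v_def by (rule symplectic_image_inner_vec[OF k Y]) (simp add: p_def)
  have "v $ p = ?B (Y *\<^sub>v ?e p) (Y *\<^sub>v ?e k)"
    using kp by (simp add: v_def Yk symp_form_unit_vec_right)
  also have "\<dots> = 1" using Y kp by (simp add: symplectic_symp_form symp_form_unit_vec_right)
  finally obtain w3 w4 where w34: "inner_vec n k w3" "inner_vec n k w4" "w3 $ p = 0" "w4 $ p = 0"
      "?T w4 *\<^sub>v (?T w3 *\<^sub>v v) = ?e p"
    using inner_vec_move_to_partner_unit_vec[OF k v] unfolding kp(4) by blast
  define Z where "Z = ?T w4 * (?T w3 * Y)"
  have Z: "fixes_outer n k Z" unfolding Z_def using keep w34 Y by blast
  have Yc: "Y \<in> carrier_mat (2*n) (2*n)" by (rule symplectic_carrier[OF Y(1)])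
  have "Z *\<^sub>v ?e k = ?e k" "Z *\<^sub>v ?e p = ?e p"
    unfolding Z_def using w34 Yc Yk kp inner_c[of w3] inner_c[of w4]
    by (simp_all add: assoc_mult_mat_vec_square[of _ "2*n"] v_def[symmetric] transvection_fixes
        symp_form_unit_vec_left)
  with Z have "fixes_outer n (Suc k) Z" unfolding fixes_outer_Suc p_def by simp
  with w12 w34 show ?thesis unfolding Z_def Y_def by blast
qed

lemma gen_grp_contains_symplectic:
  assumes T: "\<And>v. v \<in> carrier_vec (2*n) \<Longrightarrow> transvection (2*n) v \<in> gen_grp (2*n) S"
    and X: "symplectic (2*n) X"
  shows "X \<in> gen_grp (2*n) S"
proof -
  have cancel: "Y \<in> gen_grp (2*n) S"
    if "transvection (2*n) w * Y \<in> gen_grp (2*n) S" "w \<in> carrier_vec (2*n)" "Y \<in> carrier_mat (2*n) (2*n)"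
    for w Y
    using gen_grp_transvection_cancel[OF T[OF that(2)] that(2,3,1)] .
  have "X \<in> gen_grp (2*n) S" if "m \<le> n" "symplectic (2*n) X" "fixes_outer n (n - m) X" for m X
    using that
  proof (induction m arbitrary: X)
    case 0
    then have "X = 1\<^sub>m (2*n)" by (intro fixes_outer_all symplectic_carrier) simp_all
    then show ?case by (simp add: gen_grp.one)
  next
    case (Suc m)
    define k where "k = n - Suc m"
    have k: "k < n" "Suc k = n - m" using Suc.prems(1) unfolding k_def by auto
    obtain w1 w2 w3 w4 where w: "inner_vec n k w1" "inner_vec n k w2" "inner_vec n k w3" "inner_vec n k w4"
      and fix_Suc: "fixes_outer n (Suc k) (transvection (2*n) w4 * (transvection (2*n) w3 *
        (transvection (2*n) w2 * (transvection (2*n) w1 * X))))"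
      using symplectic_fixes_outer_step[OF k(1) Suc.prems(2)] Suc.prems(3) unfolding k_def by blast
    have wc: "w1 \<in> carrier_vec (2*n)" "w2 \<in> carrier_vec (2*n)" "w3 \<in> carrier_vec (2*n)" "w4 \<in> carrier_vec (2*n)"
      using w unfolding inner_vec_def by auto
    have Xc: "X \<in> carrier_mat (2*n) (2*n)" by (rule symplectic_carrier[OF Suc.prems(2)])
    let ?T = "transvection (2*n)"
    have "symplectic (2*n) (?T w4 * (?T w3 * (?T w2 * (?T w1 * X))))"
      using Suc.prems(2) wc by (simp add: symplectic_mult symplectic_transvection)
    then have "?T w4 * (?T w3 * (?T w2 * (?T w1 * X))) \<in> gen_grp (2*n) S"
      using Suc.prems(1) fix_Suc unfolding k(2) by (intro Suc.IH) simp_all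
    then have "?T w3 * (?T w2 * (?T w1 * X)) \<in> gen_grp (2*n) S"
      by (rule cancel[OF _ wc(4)]) (use Xc in simp)
    then have "?T w2 * (?T w1 * X) \<in> gen_grp (2*n) S"
      by (rule cancel[OF _ wc(3)]) (use Xc in simp)
    then have "?T w1 * X \<in> gen_grp (2*n) S"
      by (rule cancel[OF _ wc(2)]) (use Xc in simp)
    then show ?case
      by (rule cancel[OF _ wc(1)]) (use Xc in simp)
  qed
  from this[of n X] X show ?thesis by (simp add: fixes_outer_def)
qed

abbreviation gen_grp_a_w :: "nat \<Rightarrow> bit mat set" where
  "gen_grp_a_w n \<equiv> gen_grp (2*n) {gen_a n, w_hat n}"

lemma symplectic_generators: "n > 2 \<Longrightarrow> s \<in> {gen_a n, w_hat n} \<Longrightarrow> symplectic (2*n) s"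
  using symplectic_gen_a symplectic_w_hat by blast

lemma cycle_transvection_pair_mem:
  assumes n: "n > 2"
  shows "transvection (2*n) (unit_vec (2*n) (cycle_pos n k))
       * transvection (2*n) (unit_vec (2*n) (cycle_pos n k) + unit_vec (2*n) (cycle_pos n (Suc k)))
       \<in> gen_grp_a_w n"
proof (induction k)
  case 0
  show ?case
    using n by (simp add: cycle_pos_small gen_a_eq_transvections[symmetric] gen_grp.base)
next
  case (Suc k)
  have w: "w_hat n \<in> gen_grp_a_w n" by (simp add: gen_grp.base)
  let ?e = "\<lambda>j. unit_vec (2*n) (cycle_pos n j)"
  have "w_hat n *\<^sub>v (?e k + ?e (Suc k)) = ?e (Suc k) + ?e (Suc (Suc k))"
    using n by (simp add: mult_add_distrib_mat_vec[of _ "2*n" "2*n"] w_hat_mult_cycle_unit_vec)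
  with gen_grp_conj_transvection_pair[OF symplectic_generators[OF n] w Suc]
  show ?case using n by (simp add: w_hat_mult_cycle_unit_vec)
qed

lemma transvection_cycle_unit_vec_mem:
  assumes n: "n > 2"
  shows "transvection (2*n) (unit_vec (2*n) (cycle_pos n k)) \<in> gen_grp_a_w n"
proof -
  let ?T = "\<lambda>j. transvection (2*n) (unit_vec (2*n) (cycle_pos n j))"
  have w: "w_hat n \<in> gen_grp_a_w n" by (simp add: gen_grp.base)
  define W where "W = (?T 0 * transvection (2*n) (unit_vec (2*n) (cycle_pos n 0) + unit_vec (2*n) (cycle_pos n 1)))
      * (?T 1 * transvection (2*n) (unit_vec (2*n) (cycle_pos n 1) + unit_vec (2*n) (cycle_pos n 2)))
      * (?T n * transvection (2*n) (unit_vec (2*n) (cycle_pos n n) + unit_vec (2*n) (cycle_pos n (Suc n))))"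
  have "W \<in> gen_grp_a_w n"
    unfolding W_def using cycle_transvection_pair_mem[OF n] by (simp add: numeral_2_eq_2 gen_grp.mult)
  then have "W * W * W * W * W \<in> gen_grp_a_w n" by (intro gen_grp.mult)
  moreover have "W * W * W * W * W = ?T 2"
    unfolding W_def using word_fifth_power[OF n] n by (simp add: cycle_pos_small numeral_2_eq_2)
  ultimately have "?T (2 + i) \<in> gen_grp_a_w n" for i
  proof (induction i)
    case (Suc i)
    from gen_grp_conj_transvection[OF symplectic_generators[OF n] w Suc.IH[OF Suc.prems]] n
    show ?case by (simp add: w_hat_mult_cycle_unit_vec)
  qed simp
  moreover have "2 + (k + 2*n - 2) = k + 2*n" using n by simp
  then have "cycle_pos n k = cycle_pos n (2 + (k + 2*n - 2))"
    by (simp only: cycle_pos_add_period)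
  ultimately show ?thesis by metis
qed

lemma transvection_unit_vec_mem:
  assumes n: "n > 2" and i: "i < 2*n"
  shows "transvection (2*n) (unit_vec (2*n) i) \<in> gen_grp_a_w n"
  using cycle_pos_surj[OF n i] transvection_cycle_unit_vec_mem[OF n] by blast

lemma transvection_cycle_adjacent_mem:
  assumes n: "n > 2"
  shows "transvection (2*n) (unit_vec (2*n) (cycle_pos n k) + unit_vec (2*n) (cycle_pos n (Suc k))) \<in> gen_grp_a_w n"
  by (rule gen_grp_transvection_cancel[OF transvection_cycle_unit_vec_mem[OF n, of k]])
    (simp_all add: cycle_transvection_pair_mem[OF n])

lemma transvection_closed_cycle_pairs:
  assumes n: "n > 2" and closed: "transvection_closed (2*n) V"
    and units: "\<And>i. i < 2*n \<Longrightarrow> unit_vec (2*n) i \<in> V"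
    and adjacent: "\<And>k. unit_vec (2*n) (cycle_pos n k) + unit_vec (2*n) (cycle_pos n (Suc k)) \<in> V"
  shows "1 \<le> m \<Longrightarrow> m \<le> n - 1 \<Longrightarrow> unit_vec (2*n) (cycle_pos n s) + unit_vec (2*n) (cycle_pos n (s + m)) \<in> V"
proof (induction m)
  case (Suc m)
  show ?case
  proof (cases "m = 0")
    case True
    with adjacent show ?thesis by simp
  next
    case False
    with Suc.prems have m: "1 \<le> m" "m + 1 \<le> n - 1" by auto
    let ?c = "cycle_pos n"
    have ne: "?c s' \<noteq> ?c (s' + k)" if "0 < k" "k < 2*n" for s' k
      using cycle_pos_add_neq[OF n that] by metis
    have partner: "2*n - 1 - ?c j = ?c (j + n)" for j
      using cycle_pos_add_half[OF n] by simp
    have "unit_vec (2*n) (?c s) + unit_vec (2*n) (?c (s + m + 1)) \<in> V"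
    proof (rule transvection_closed_exchange[OF closed units])
      show "?c s < 2*n" "?c (s + m) < 2*n" "?c (s + m + 1) < 2*n" using n by (simp_all add: cycle_pos_less)
      show "?c s \<noteq> ?c (s + m)" using ne[of m s] m by simp
      show "?c s \<noteq> ?c (s + m + 1)" using ne[of "m + 1" s] m by (simp add: add.assoc)
      show "?c (s + m) \<noteq> ?c (s + m + 1)" using ne[of 1 "s + m"] n by simp
      show "?c s \<noteq> 2*n-1 - ?c (s + m)" unfolding partner using ne[of "m + n" s] m by (simp add: add.assoc)
      show "?c s \<noteq> 2*n-1 - ?c (s + m + 1)"
        unfolding partner using ne[of "m + 1 + n" s] m by (simp add: add.assoc)
      show "?c (s + m) \<noteq> 2*n-1 - ?c (s + m + 1)"
        unfolding partner using ne[of "1 + n" "s + m"] m by (simp add: add.assoc)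
      show "unit_vec (2*n) (?c s) + unit_vec (2*n) (?c (s + m)) \<in> V" using Suc.IH m by simp
      show "unit_vec (2*n) (2*n-1 - ?c (s + m)) + unit_vec (2*n) (2*n-1 - ?c (s + m + 1)) \<in> V"
        using adjacent[of "s + m + n"] unfolding partner by simp
    qed
    then show ?thesis by simp
  qed
qed simp

lemma transvection_closed_unit_vec_pairs:
  assumes n: "n > 2" and closed: "transvection_closed (2*n) V"
    and units: "\<And>i. i < 2*n \<Longrightarrow> unit_vec (2*n) i \<in> V"
    and adjacent: "\<And>k. unit_vec (2*n) (cycle_pos n k) + unit_vec (2*n) (cycle_pos n (Suc k)) \<in> V"
    and ab: "a < 2*n" "b < 2*n" "a \<noteq> b" "b \<noteq> 2*n - 1 - a"
  shows "unit_vec (2*n) a + unit_vec (2*n) b \<in> V"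
proof -
  let ?c = "cycle_pos n" and ?e = "unit_vec (2*n)"
  have cycle_pairs: "?e (?c s') + ?e (?c (s' + m')) \<in> V" if "1 \<le> m'" "m' \<le> n - 1" for s' m'
    using transvection_closed_cycle_pairs[OF n closed _ adjacent that] units by blast
  have ordered: "?e (?c s) + ?e (?c t) \<in> V"
    if st: "s < t" "t < 2*n" "?c t \<noteq> 2*n - 1 - ?c s" for s t
  proof -
    define m where "m = t - s"
    have t: "t = s + m" unfolding m_def using st by simp
    have "m \<noteq> n" using st(3) cycle_pos_add_half[OF n, of s] t by auto
    then consider "1 \<le> m" "m \<le> n - 1" | "1 \<le> 2*n - m" "2*n - m \<le> n - 1"
      using st unfolding m_def by linarith
    then show ?thesis
    proof cases
      case 1
      then show ?thesis unfolding t by (rule cycle_pairs)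
    next
      case 2
      have "t + (2*n - m) = s + 2*n" using st unfolding m_def by simp
      then have "?c (t + (2*n - m)) = ?c s" by (simp add: cycle_pos_add_period)
      with cycle_pairs[OF 2, of t] show ?thesis
        by (simp add: comm_add_vec[of "?e (?c s)" "2*n"])
    qed
  qed
  obtain s t where st: "s < 2*n" "t < 2*n" "?c s = a" "?c t = b"
    using cycle_pos_surj[OF n] ab(1,2) by metis
  have "s \<noteq> t" using st ab(3) by auto
  then consider "s < t" | "t < s" by linarith
  then show ?thesis
  proof cases
    case 1
    with ordered[of s t] st ab(4) show ?thesis by simp
  next
    case 2
    have "a \<noteq> 2*n - 1 - b" using ab by auto
    with ordered[of t s] 2 st show ?thesis by (simp add: comm_add_vec[of "?e a" "2*n"])
  qed
qed

lemma transvection_closed_gen_grp: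
  assumes S: "\<And>s. s \<in> S \<Longrightarrow> symplectic (2*n) s"
  shows "transvection_closed (2*n) {v \<in> carrier_vec (2*n). transvection (2*n) v \<in> gen_grp (2*n) S}"
  unfolding transvection_closed_def
  using gen_grp_conj_transvection[OF S] symplectic_transvection by simp

theorem mainTheorem6:
  fixes n :: nat
  assumes "n > 2"
  shows "gen_grp (2*n) {gen_a n, w_hat n} = Sp2 n"
proof
  note gens = symplectic_generators[OF assms]
  show "gen_grp (2*n) {gen_a n, w_hat n} \<subseteq> Sp2 n"
  proof
    fix X assume "X \<in> gen_grp (2*n) {gen_a n, w_hat n}"
    with gens have "symplectic (2*n) X" by (rule gen_grp_symplectic)
    then show "X \<in> Sp2 n" by (simp add: Sp2_iff_symplectic)
  qed
  define V where "V = {v \<in> carrier_vec (2*n). transvection (2*n) v \<in> gen_grp_a_w n}"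
  have closed: "transvection_closed (2*n) V"
    unfolding V_def by (rule transvection_closed_gen_grp[OF gens])
  have units: "unit_vec (2*n) i \<in> V" if "i < 2*n" for i
    unfolding V_def using transvection_unit_vec_mem[OF assms that] by simp
  have adjacent: "unit_vec (2*n) (cycle_pos n k) + unit_vec (2*n) (cycle_pos n (Suc k)) \<in> V" for k
    unfolding V_def using transvection_cycle_adjacent_mem[OF assms] by simp
  have zero: "0\<^sub>v (2*n) \<in> V" unfolding V_def by (simp add: transvection_zero gen_grp.one)
  have pairs: "unit_vec (2*n) a + unit_vec (2*n) b \<in> V"
    if "a < 2*n" "b < 2*n" "a \<noteq> b" "b \<noteq> 2*n - 1 - a" for a b
    by (rule transvection_closed_unit_vec_pairs[OF assms closed _ adjacent that]) (rule units)
  have "v \<in> V" if "v \<in> carrier_vec (2*n)" for v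
    by (rule transvection_closed_carrier[OF closed zero _ _ that]) (simp_all add: units pairs)
  then have transvections: "transvection (2*n) v \<in> gen_grp_a_w n" if "v \<in> carrier_vec (2*n)" for v
    using that unfolding V_def by blast
  show "Sp2 n \<subseteq> gen_grp (2*n) {gen_a n, w_hat n}"
  proof
    fix X assume "X \<in> Sp2 n"
    then have "symplectic (2*n) X" by (simp add: Sp2_iff_symplectic)
    with transvections show "X \<in> gen_grp (2*n) {gen_a n, w_hat n}" by (rule gen_grp_contains_symplectic)
  qed
qed

end
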